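(* For $0<d_m\le\frac1{SA}$, let $\mathcal M_{d_m}:=\{(\mu,M):\min_{t,s_t,a_t}d^\mu_t(s_t,a_t)\ge d_m\}$, where $M$ ranges over finite-horizon tabular MDPs with stationary transitions, $S$ states, $A$ actions and horizon $H$, and $\mu$ over behavior policies. There exist universal constants $c_1,c_2,c,p>0$ such that, whenever $H,S,A\ge c_1$ and $0<\epsilon<c_2$, if $n\le cH^2/(d_m\epsilon^2)$ then \[ \inf_{\mathrm{alg}}\ \sup_{(\mu,M)\in\mathcal M_{d_m}}\mathbb P_{\mu,M}\big(v^\star-v^{\pi_{\mathrm{alg}}}\ge\epsilon\big)\ge p, \] where the infimum is over all algorithms that output a policy $\pi_{\mathrm{alg}}$ from $n$ episodes of offline data generated by $\mu$ on $M$.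
   Context: A finite-horizon MDP has finite state/action sets, horizon $H$, rewards in $[0,1]$, a transition kernel $P$ identical at all steps (stationary), and initial distribution $d_1$. Offline data: $n$ i.i.d. episodes obtained by running the behavior policy $\mu$ in $M$. $d^\mu_t(s,a)=\mathbb P^\mu(s_t=s,a_t=a)$. For a policy $\pi$, $v^\pi=\mathbb E^\pi[\sum_{t=1}^Hr_t]$ (with $s_1\sim d_1$) and $v^\star=\sup_\pi v^\pi$. $\mathbb P_{\mu,M}$ denotes probability over the data and the algorithm. *)

theory Defs
  imports "HOL-Probability.Probability"
begin

text \<open>States are naturals below S, actions naturals below A, time steps 1..H.\<close>

record mdp =
  init :: "nat pmf"
  trans :: "nat \<Rightarrow> nat \<Rightarrow> nat pmf"
  rew :: "nat \<Rightarrow> nat \<Rightarrow> nat \<Rightarrow> real"         (* reward r_t(s,a) *)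

type_synonym policy = "nat \<Rightarrow> nat \<Rightarrow> nat pmf"   (* pi_t(. | s) *)
type_synonym episode = "(nat \<times> nat \<times> real) list"  (* (s_t, a_t, r_t), t = 1..H *)

definition valid_mdp :: "nat \<Rightarrow> nat \<Rightarrow> nat \<Rightarrow> mdp \<Rightarrow> bool" where
  "valid_mdp S A H M \<longleftrightarrow>
     set_pmf (init M) \<subseteq> {..<S} \<and>
     (\<forall>s<S. \<forall>a<A. set_pmf (trans M s a) \<subseteq> {..<S}) \<and>
     (\<forall>t\<in>{1..H}. \<forall>s<S. \<forall>a<A. 0 \<le> rew M t s a \<and> rew M t s a \<le> 1)"

definition valid_policy :: "nat \<Rightarrow> nat \<Rightarrow> nat \<Rightarrow> policy \<Rightarrow> bool" where
  "valid_policy S A H \<pi> \<longleftrightarrow> (\<forall>t\<in>{1..H}. \<forall>s<S. set_pmf (\<pi> t s) \<subseteq> {..<A})"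

fun traj :: "mdp \<Rightarrow> policy \<Rightarrow> nat \<Rightarrow> nat \<Rightarrow> nat \<Rightarrow> episode pmf" where
  "traj M \<pi> t s 0 = return_pmf []"
| "traj M \<pi> t s (Suc k) =
     bind_pmf (\<pi> t s) (\<lambda>a. bind_pmf (trans M s a) (\<lambda>s'.
       map_pmf (\<lambda>rest. (s, a, rew M t s a) # rest) (traj M \<pi> (Suc t) s' k)))"

definition episode_pmf :: "mdp \<Rightarrow> policy \<Rightarrow> nat \<Rightarrow> episode pmf" where
  "episode_pmf M \<pi> H = bind_pmf (init M) (\<lambda>s. traj M \<pi> 1 s H)"

definition pol_value :: "mdp \<Rightarrow> nat \<Rightarrow> policy \<Rightarrow> real" where
  "pol_value M H \<pi> = measure_pmf.expectation (episode_pmf M \<pi> H) (\<lambda>\<tau>. sum_list (map (\<lambda>(s,a,r). r) \<tau>))"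

definition opt_value :: "nat \<Rightarrow> nat \<Rightarrow> nat \<Rightarrow> mdp \<Rightarrow> real" where
  "opt_value S A H M = (SUP \<pi>\<in>{\<pi>. valid_policy S A H \<pi>}. pol_value M H \<pi>)"

definition occupancy :: "mdp \<Rightarrow> policy \<Rightarrow> nat \<Rightarrow> nat \<Rightarrow> nat \<Rightarrow> nat \<Rightarrow> real" where
  "occupancy M \<mu> H t s a =
     measure_pmf.prob (episode_pmf M \<mu> H) {\<tau>. fst (\<tau> ! (t - 1)) = s \<and> fst (snd (\<tau> ! (t - 1))) = a}"

definition class_dm :: "nat \<Rightarrow> nat \<Rightarrow> nat \<Rightarrow> real \<Rightarrow> (policy \<times> mdp) set" where
  "class_dm S A H dm = {(\<mu>, M). valid_mdp S A H M \<and> valid_policy S A H \<mu> \<and>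
       (\<forall>t\<in>{1..H}. \<forall>s<S. \<forall>a<A. occupancy M \<mu> H t s a \<ge> dm)}"

definition data_pmf :: "nat \<Rightarrow> mdp \<Rightarrow> policy \<Rightarrow> nat \<Rightarrow> (nat \<Rightarrow> episode) pmf" where
  "data_pmf n M \<mu> H = Pi_pmf {..<n} [] (\<lambda>_. episode_pmf M \<mu> H)"

definition valid_alg :: "nat \<Rightarrow> nat \<Rightarrow> nat \<Rightarrow> ((nat \<Rightarrow> episode) \<Rightarrow> policy pmf) \<Rightarrow> bool" where
  "valid_alg S A H alg \<longleftrightarrow> (\<forall>D. \<forall>\<pi>\<in>set_pmf (alg D). valid_policy S A H \<pi>)"

definition fail_prob ::
  "nat \<Rightarrow> nat \<Rightarrow> nat \<Rightarrow> nat \<Rightarrow> real \<Rightarrow> ((nat \<Rightarrow> episode) \<Rightarrow> policy pmf) \<Rightarrow> policy \<Rightarrow> mdp \<Rightarrow> real" where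
  "fail_prob S A H n \<epsilon> alg \<mu> M =
     measure_pmf.prob (bind_pmf (data_pmf n M \<mu> H) alg)
       {\<pi>. opt_value S A H M - pol_value M H \<pi> \<ge> \<epsilon>}"

end

theory Submission
  imports Defs
begin

text \<open>
  Assouad's method, applied to hard instances indexed by \<open>\<sigma> \<subseteq> {..<m}\<close> with \<open>m = S div 2\<close>.
  In pair \<open>i\<close> of states, actions 1 and 2 move from a rewardless state to a rewarding one
  with probabilities \<open>q0 \<plusminus> \<delta>\<close>, \<open>q0 = 1 / (4 H)\<close>, and whether \<open>i \<in> \<sigma>\<close> decides which of the two
  actions is the good one. Whatever a policy does in pair \<open>i\<close>, on one of the instances \<open>\<sigma>\<close> and
  \<open>\<sigma>\<close> with \<open>i\<close> flipped it loses about \<open>\<delta> H\<^sup>2 / S\<close> of value there; with \<open>\<delta>\<close> of order \<open>\<epsilon> / H\<^sup>2\<close>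
  it is therefore \<open>\<epsilon>\<close>-suboptimal as soon as it errs on a constant fraction of the pairs.
  The behaviour policy plays actions 1 and 2 with probability \<open>S dm\<close> each and leaves the
  uniform state distribution stationary, so all occupancies are at least \<open>dm\<close>; and one episode
  lowers the Bhattacharyya coefficient between the two instances by only \<open>O(H\<^sup>2 dm \<delta>\<^sup>2)\<close>.
  For \<open>n = O(H\<^sup>2 / (dm \<epsilon>\<^sup>2))\<close> episodes the two data distributions thus overlap by a constant, and
  averaging over \<open>\<sigma>\<close> yields a constant failure probability for every algorithm.
\<close>

lemma integrable_measure_pmf_bounded:
  fixes f :: "'a \<Rightarrow> real"
  assumes "\<And>x. x \<in> set_pmf p \<Longrightarrow> \<bar>f x\<bar> \<le> B"
  shows "integrable (measure_pmf p) f"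
  by (rule measure_pmf.integrable_const_bound[where B=B]) (auto simp: AE_measure_pmf_iff assms)

lemma expectation_pmf_bounds:
  fixes f :: "'a \<Rightarrow> real"
  assumes "\<And>x. 0 \<le> f x" "\<And>x. f x \<le> c"
  shows "0 \<le> measure_pmf.expectation p f" "measure_pmf.expectation p f \<le> c"
proof -
  have "integrable (measure_pmf p) f"
    using assms by (intro integrable_measure_pmf_bounded[where B=c]) (simp add: abs_of_nonneg)
  then show "measure_pmf.expectation p f \<le> c"
    using integral_mono[of p f "\<lambda>_. c"] assms(2) by simp
  show "0 \<le> measure_pmf.expectation p f"
    using assms(1) by (intro integral_nonneg_AE) auto
qed

lemma expectation_bind_pmf:
  fixes f :: "'b \<Rightarrow> real"
  assumes bounded: "\<And>y. y \<in> set_pmf (bind_pmf p K) \<Longrightarrow> \<bar>f y\<bar> \<le> B"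
  shows "measure_pmf.expectation (bind_pmf p K) f
           = measure_pmf.expectation p (\<lambda>x. measure_pmf.expectation (K x) f)"
proof -
  define g where "g y = max (-\<bar>B\<bar>) (min \<bar>B\<bar> (f y))" for y
  have fg: "y \<in> set_pmf (bind_pmf p K) \<Longrightarrow> g y = f y" for y
    using bounded[of y] unfolding g_def by auto
  have "measure_pmf.expectation (bind_pmf p K) f = measure_pmf.expectation (bind_pmf p K) g"
    by (intro integral_cong_AE) (auto simp: AE_measure_pmf_iff fg)
  also have "\<dots> = measure_pmf.expectation p (\<lambda>x. measure_pmf.expectation (K x) g)"
    unfolding measure_pmf_bind
    by (rule integral_bind[where K="count_space UNIV" and B="\<bar>B\<bar>" and B'=1])
       (auto simp: g_def measure_pmf.emeasure_space_1 measure_pmf_in_subprob_algebra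
             intro!: measure_pmf.finite_measure_axioms)
  also have "\<dots> = measure_pmf.expectation p (\<lambda>x. measure_pmf.expectation (K x) f)"
    by (intro integral_cong_AE) (auto simp: AE_measure_pmf_iff intro!: integral_cong_AE fg bexI)
  finally show ?thesis .
qed

lemma pmf_bind_finite:
  assumes "finite X" "set_pmf p \<subseteq> X"
  shows "pmf (bind_pmf p F) y = (\<Sum>x\<in>X. pmf p x * pmf (F x) y)"
  unfolding pmf_bind using assms
  by (subst integral_measure_pmf_real[of X]) (auto simp: mult.commute)

lemma prob_bind_pmf_finite:
  assumes "finite (set_pmf p)"
  shows "measure_pmf.prob (bind_pmf p K) E = (\<Sum>x\<in>set_pmf p. pmf p x * measure_pmf.prob (K x) E)"
proof -
  have "measure_pmf.prob (bind_pmf p K) E = measure_pmf.expectation (bind_pmf p K) (indicator E)"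
    by simp
  also have "\<dots> = measure_pmf.expectation p (\<lambda>x. measure_pmf.prob (K x) E)"
    by (subst expectation_bind_pmf[where B=1]) (auto simp: indicator_def)
  also have "\<dots> = (\<Sum>x\<in>set_pmf p. pmf p x * measure_pmf.prob (K x) E)"
    using assms by (subst integral_measure_pmf_real) (auto simp: mult.commute)
  finally show ?thesis .
qed

lemma finite_set_bind_pmf:
  "finite (set_pmf p) \<Longrightarrow> (\<And>x. x \<in> set_pmf p \<Longrightarrow> finite (set_pmf (F x)))
     \<Longrightarrow> finite (set_pmf (bind_pmf p F))"
  by (auto simp: set_bind_pmf)

lemma finite_set_Pi_pmf:
  "finite A \<Longrightarrow> (\<And>x. x \<in> A \<Longrightarrow> finite (set_pmf (p x))) \<Longrightarrow> finite (set_pmf (Pi_pmf A d p))"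
  by (auto simp: set_Pi_pmf)

lemma prob_ge_of_expectation_ge:
  fixes N :: "'a \<Rightarrow> real"
  assumes "\<And>x. 0 \<le> N x" "\<And>x. N x \<le> b" "0 \<le> a"
  shows "measure_pmf.expectation p N - a \<le> b * measure_pmf.prob p {x. a \<le> N x}"
proof -
  define G where "G = {x. a \<le> N x}"
  have int_N: "integrable (measure_pmf p) N"
    using assms by (intro integrable_measure_pmf_bounded[where B=b]) auto
  have int_G: "integrable (measure_pmf p) (\<lambda>x. b * indicator G x :: real)"
    by (intro integrable_measure_pmf_bounded[where B="\<bar>b\<bar>"]) (auto simp: indicator_def)
  have "N x \<le> b * indicator G x + a" for x
    using assms(2)[of x] assms(3) by (auto simp: G_def indicator_def)
  then have "measure_pmf.expectation p N \<le> measure_pmf.expectation p (\<lambda>x. b * indicator G x + a)"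
    using int_N int_G by (intro integral_mono) auto
  also have "\<dots> = b * measure_pmf.prob p G + a"
    using int_G by simp
  finally show ?thesis unfolding G_def by simp
qed

lemma sum_sqrt_mult_le:
  fixes a b :: "'i \<Rightarrow> real"
  assumes "\<And>i. i \<in> I \<Longrightarrow> a i \<ge> 0" "\<And>i. i \<in> I \<Longrightarrow> b i \<ge> 0"
  shows "(\<Sum>i\<in>I. sqrt (a i * b i)) \<le> sqrt ((\<Sum>i\<in>I. a i) * (\<Sum>i\<in>I. b i))"
proof -
  have "(\<Sum>i\<in>I. sqrt (a i) * sqrt (b i))\<^sup>2 \<le> (\<Sum>i\<in>I. (sqrt (a i))\<^sup>2) * (\<Sum>i\<in>I. (sqrt (b i))\<^sup>2)"
    by (rule Cauchy_Schwarz_ineq_sum)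
  also have "\<dots> = (\<Sum>i\<in>I. a i) * (\<Sum>i\<in>I. b i)"
    using assms by (intro arg_cong2[where f="(*)"] sum.cong) auto
  finally have "(\<Sum>i\<in>I. sqrt (a i * b i))\<^sup>2 \<le> (\<Sum>i\<in>I. a i) * (\<Sum>i\<in>I. b i)"
    by (simp add: real_sqrt_mult)
  then show ?thesis by (simp add: real_le_rsqrt)
qed

lemma sqrt_diff_square_ge:
  fixes a d :: real
  assumes "0 < a" "0 \<le> d" "d \<le> a"
  shows "a - d\<^sup>2 / a \<le> sqrt (a\<^sup>2 - d\<^sup>2)"
proof -
  have d2: "d\<^sup>2 \<le> a\<^sup>2" using assms by (intro power_mono) auto
  then have "0 \<le> a - d\<^sup>2 / a"
    using assms by (simp add: field_simps power2_eq_square)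
  moreover have "(a - d\<^sup>2 / a)\<^sup>2 = a\<^sup>2 - d\<^sup>2 - d\<^sup>2 * (a\<^sup>2 - d\<^sup>2) / a\<^sup>2"
    using assms by (simp add: power2_eq_square field_simps)
  moreover have "0 \<le> d\<^sup>2 * (a\<^sup>2 - d\<^sup>2) / a\<^sup>2"
    using d2 by simp
  ultimately show ?thesis by (simp add: real_le_rsqrt)
qed

lemma double_le_add_of_square_le_mult:
  fixes x y z :: real
  assumes "z\<^sup>2 \<le> x * y" "0 \<le> x" "0 \<le> y" "0 \<le> z"
  shows "2 * z \<le> x + y"
proof -
  have "(2 * z)\<^sup>2 \<le> (x + y)\<^sup>2"
    using assms(1) zero_le_power2[of "x - y"] by (simp add: power2_eq_square algebra_simps)
  then show ?thesis by (rule power2_le_imp_le) (use assms in auto)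
qed

lemma power_Suc_diff_ge:
  fixes b g :: real
  assumes "0 \<le> g" "g \<le> b"
  shows "real (Suc j) * g ^ j * (b - g) \<le> b ^ Suc j - g ^ Suc j"
proof -
  have "g ^ j \<le> b ^ i * g ^ (j - i)" if "i < Suc j" for i
  proof -
    have "g ^ j = g ^ i * g ^ (j - i)"
      using that by (simp flip: power_add)
    also have "\<dots> \<le> b ^ i * g ^ (j - i)"
      using assms by (intro mult_right_mono power_mono) auto
    finally show ?thesis .
  qed
  then have "(\<Sum>i<Suc j. g ^ j) \<le> (\<Sum>i<Suc j. b ^ i * g ^ (j - i))"
    by (intro sum_mono) auto
  then have "real (Suc j) * g ^ j \<le> (\<Sum>i<Suc j. b ^ i * g ^ (j - i))"
    by (simp only: sum_constant card_lessThan)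
  then show ?thesis
    using assms by (simp only: diff_power_eq_sum mult.commute[of "b - g"]) (auto intro: mult_right_mono)
qed

lemma geometric_sum_diff_ge:
  fixes b g :: real
  assumes "0 \<le> g" "g \<le> b" "g \<le> 1" "1 / 2 \<le> g ^ n"
  shows "(b - g) * real n * (real n - 1) / 4 \<le> (\<Sum>j<n. b ^ j) - (\<Sum>j<n. g ^ j)"
proof -
  have term_ge: "real j * (b - g) / 2 \<le> b ^ j - g ^ j" if "j < n" for j
  proof (cases j)
    case (Suc i)
    have "1 / 2 \<le> g ^ i"
      using assms that Suc power_decreasing[of i n g] by auto
    from mult_left_mono[OF this, of "real j * (b - g)"]
    have "real j * (b - g) * (1 / 2) \<le> real j * (b - g) * g ^ i"
      using assms by simp
    then have "real j * (b - g) / 2 \<le> real (Suc i) * g ^ i * (b - g)"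
      using Suc by (simp add: mult_ac)
    also have "\<dots> \<le> b ^ j - g ^ j"
      using power_Suc_diff_ge[OF assms(1,2), of i] Suc by simp
    finally show ?thesis .
  qed simp
  have gauss: "(\<Sum>j<n. real j) = real n * (real n - 1) / 2"
    by (induction n) (auto simp: algebra_simps)
  have "(b - g) * real n * (real n - 1) / 4 = (\<Sum>j<n. real j * (b - g) / 2)"
    by (simp add: sum_divide_distrib[symmetric] sum_distrib_right[symmetric] gauss)
  also have "\<dots> \<le> (\<Sum>j<n. b ^ j - g ^ j)"
    using term_ge by (intro sum_mono) auto
  finally show ?thesis by (simp add: sum_subtractf)
qed

section \<open>Assouad's averaging over the hypercube\<close>

lemma sum_Pow_remove:
  fixes f :: "'a set \<Rightarrow> real"
  assumes "finite A" "i \<in> A"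
  shows "(\<Sum>\<sigma>\<in>Pow A. f \<sigma>) = (\<Sum>\<tau>\<in>Pow (A - {i}). f (insert i \<tau>) + f \<tau>)"
proof -
  have "Pow A = Pow (A - {i}) \<union> insert i ` Pow (A - {i})"
    using assms Pow_insert[of i "A - {i}"] by (simp add: insert_absorb)
  moreover have "Pow (A - {i}) \<inter> insert i ` Pow (A - {i}) = {}" by auto
  moreover have "inj_on (insert i) (Pow (A - {i}))" by (auto simp: inj_on_def)
  ultimately show ?thesis
    using assms by (simp add: sum.union_disjoint sum.reindex sum.distrib)
qed

lemma assouad_averaging:
  fixes f :: "nat set \<Rightarrow> nat \<Rightarrow> real"
  assumes pair: "\<And>\<sigma> i. i < m \<Longrightarrow> i \<notin> \<sigma> \<Longrightarrow> c \<le> f (insert i \<sigma>) i + f \<sigma> i"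
  shows "\<exists>\<sigma>. real m * c / 2 \<le> (\<Sum>i<m. f \<sigma> i)"
proof (rule ccontr)
  assume "\<not> ?thesis"
  then have small: "(\<Sum>i<m. f \<sigma> i) < real m * c / 2" for \<sigma>
    by (simp add: not_le)
  have per_coordinate: "2 ^ m * c / 2 \<le> (\<Sum>\<sigma>\<in>Pow {..<m}. f \<sigma> i)" if "i < m" for i
  proof -
    have "2 ^ m * c / 2 = (\<Sum>\<tau>\<in>Pow ({..<m} - {i}). c)"
      using that by (cases m) (auto simp: card_Pow)
    also have "\<dots> \<le> (\<Sum>\<tau>\<in>Pow ({..<m} - {i}). f (insert i \<tau>) i + f \<tau> i)"
      using that by (intro sum_mono pair) auto
    also have "\<dots> = (\<Sum>\<sigma>\<in>Pow {..<m}. f \<sigma> i)"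
      using that by (intro sum_Pow_remove[symmetric]) auto
    finally show ?thesis .
  qed
  have "real m * (2 ^ m * c / 2) \<le> (\<Sum>i<m. \<Sum>\<sigma>\<in>Pow {..<m}. f \<sigma> i)"
    using sum_mono[of "{..<m}", OF per_coordinate] by simp
  also have "\<dots> = (\<Sum>\<sigma>\<in>Pow {..<m}. \<Sum>i<m. f \<sigma> i)"
    by (rule sum.swap)
  also have "\<dots> < (\<Sum>\<sigma>\<in>Pow {..<m}. real m * c / 2)"
    using small by (intro sum_strict_mono) auto
  also have "\<dots> = real m * (2 ^ m * c / 2)"
    by (simp add: card_Pow)
  finally show False by simp
qed

section \<open>Bhattacharyya coefficient and overlap\<close>

text \<open>Both are only meaningful for finitely supported pmfs: a sum over an infinite set is 0.\<close>

definition bhattacharyya :: "'a pmf \<Rightarrow> 'a pmf \<Rightarrow> real" where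
  "bhattacharyya P Q = (\<Sum>x\<in>set_pmf P \<union> set_pmf Q. sqrt (pmf P x * pmf Q x))"

definition overlap :: "'a pmf \<Rightarrow> 'a pmf \<Rightarrow> real" where
  "overlap P Q = (\<Sum>x\<in>set_pmf P \<union> set_pmf Q. min (pmf P x) (pmf Q x))"

lemma bhattacharyya_nonneg: "bhattacharyya P Q \<ge> 0"
  unfolding bhattacharyya_def by (intro sum_nonneg) auto

lemma bhattacharyya_self: "finite (set_pmf P) \<Longrightarrow> bhattacharyya P P = 1"
  unfolding bhattacharyya_def by (simp add: sum_pmf_eq_1)

lemma bhattacharyya_eq_sum_set_pmf:
  assumes "finite (set_pmf P)" "finite (set_pmf Q)"
  shows "bhattacharyya P Q = (\<Sum>x\<in>set_pmf P. sqrt (pmf P x * pmf Q x))"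
  unfolding bhattacharyya_def using assms
  by (intro sum.mono_neutral_right) (auto simp: set_pmf_iff)

lemma bhattacharyya_bind_ge:
  assumes fp: "finite (set_pmf p)" and fq: "finite (set_pmf q)"
    and fP: "finite (set_pmf (bind_pmf p F))" and fQ: "finite (set_pmf (bind_pmf q G))"
  shows "(\<Sum>x\<in>set_pmf p. sqrt (pmf p x * pmf q x) * bhattacharyya (F x) (G x))
           \<le> bhattacharyya (bind_pmf p F) (bind_pmf q G)"
proof -
  define X where "X = set_pmf p \<union> set_pmf q"
  define U where "U = set_pmf (bind_pmf p F) \<union> set_pmf (bind_pmf q G)"
  have fX: "finite X" and fU: "finite U" using fp fq fP fQ by (auto simp: X_def U_def)
  have split_sqrt: "sqrt ((pmf p x * pmf (F x) y) * (pmf q x * pmf (G x) y))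
                    = sqrt (pmf p x * pmf q x) * sqrt (pmf (F x) y * pmf (G x) y)" for x y
    by (subst real_sqrt_mult[symmetric]) (simp add: mult_ac)
  have "(\<Sum>x\<in>set_pmf p. sqrt (pmf p x * pmf q x) * bhattacharyya (F x) (G x))
      = (\<Sum>x\<in>X. sqrt (pmf p x * pmf q x) * bhattacharyya (F x) (G x))"
    using fX by (intro sum.mono_neutral_left) (auto simp: X_def set_pmf_iff)
  also have "\<dots> \<le> (\<Sum>x\<in>X. sqrt (pmf p x * pmf q x) * (\<Sum>y\<in>U. sqrt (pmf (F x) y * pmf (G x) y)))"
  proof (intro sum_mono)
    fix x
    show "sqrt (pmf p x * pmf q x) * bhattacharyya (F x) (G x)
          \<le> sqrt (pmf p x * pmf q x) * (\<Sum>y\<in>U. sqrt (pmf (F x) y * pmf (G x) y))"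
    proof (cases "x \<in> set_pmf p \<and> x \<in> set_pmf q")
      case True
      then have "set_pmf (F x) \<union> set_pmf (G x) \<subseteq> U" by (auto simp: U_def)
      then have "bhattacharyya (F x) (G x) \<le> (\<Sum>y\<in>U. sqrt (pmf (F x) y * pmf (G x) y))"
        unfolding bhattacharyya_def using fU by (intro sum_mono2) auto
      then show ?thesis by (intro mult_left_mono) auto
    qed (auto simp: set_pmf_iff)
  qed
  also have "\<dots> = (\<Sum>y\<in>U. \<Sum>x\<in>X. sqrt ((pmf p x * pmf (F x) y) * (pmf q x * pmf (G x) y)))"
    unfolding split_sqrt by (subst sum.swap) (simp add: sum_distrib_left)
  also have "\<dots> \<le> (\<Sum>y\<in>U. sqrt ((\<Sum>x\<in>X. pmf p x * pmf (F x) y) * (\<Sum>x\<in>X. pmf q x * pmf (G x) y)))"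
    by (intro sum_mono sum_sqrt_mult_le) auto
  also have "\<dots> = bhattacharyya (bind_pmf p F) (bind_pmf q G)"
    unfolding bhattacharyya_def U_def[symmetric] using fX
    by (simp add: pmf_bind_finite[of X] X_def)
  finally show ?thesis .
qed

lemma bhattacharyya_bind_ge_mult:
  assumes "finite (set_pmf p)" "finite (set_pmf q)"
    and "finite (set_pmf (bind_pmf p F))" "finite (set_pmf (bind_pmf q G))"
    and "\<And>x. x \<in> set_pmf p \<Longrightarrow> c \<le> bhattacharyya (F x) (G x)"
  shows "c * bhattacharyya p q \<le> bhattacharyya (bind_pmf p F) (bind_pmf q G)"
proof -
  have "c * bhattacharyya p q = (\<Sum>x\<in>set_pmf p. sqrt (pmf p x * pmf q x) * c)"
    using assms(1,2) by (simp add: bhattacharyya_eq_sum_set_pmf sum_distrib_left mult.commute)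
  also have "\<dots> \<le> (\<Sum>x\<in>set_pmf p. sqrt (pmf p x * pmf q x) * bhattacharyya (F x) (G x))"
    using assms(5) by (intro sum_mono mult_left_mono) auto
  also have "\<dots> \<le> bhattacharyya (bind_pmf p F) (bind_pmf q G)"
    using assms(1-4) by (rule bhattacharyya_bind_ge)
  finally show ?thesis .
qed

lemma bhattacharyya_map_pmf_ge:
  assumes "finite (set_pmf P)" "finite (set_pmf Q)"
  shows "bhattacharyya P Q \<le> bhattacharyya (map_pmf f P) (map_pmf f Q)"
  using bhattacharyya_bind_ge_mult[of P Q "\<lambda>x. return_pmf (f x)" "\<lambda>x. return_pmf (f x)" 1] assms
  by (simp add: map_pmf_def bhattacharyya_self)

lemma bhattacharyya_Pi_pmf_ge:
  assumes fP: "finite (set_pmf P)" and fQ: "finite (set_pmf Q)"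
  shows "bhattacharyya P Q ^ n
           \<le> bhattacharyya (Pi_pmf {..<n} d (\<lambda>_. P)) (Pi_pmf {..<n} d (\<lambda>_. Q))"
proof (induction n)
  case 0
  then show ?case by (simp add: bhattacharyya_self)
next
  case (Suc n)
  define Pn where "Pn = Pi_pmf {..<n} d (\<lambda>_. P)"
  define Qn where "Qn = Pi_pmf {..<n} d (\<lambda>_. Q)"
  have fPn: "finite (set_pmf Pn)" and fQn: "finite (set_pmf Qn)"
    using fP fQ by (auto simp: Pn_def Qn_def intro!: finite_set_Pi_pmf)
  have Pi_Suc: "Pi_pmf {..<Suc n} d (\<lambda>_. R) = bind_pmf R (\<lambda>y. map_pmf (\<lambda>f. f(n := y)) (Pi_pmf {..<n} d (\<lambda>_. R)))"
    for R :: "'a pmf"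
    unfolding lessThan_Suc by (subst Pi_pmf_insert') (auto simp: map_pmf_def)
  have "bhattacharyya P Q ^ Suc n \<le> bhattacharyya Pn Qn * bhattacharyya P Q"
    using mult_left_mono[OF Suc.IH bhattacharyya_nonneg[of P Q]] by (simp add: Pn_def Qn_def mult.commute)
  also have "\<dots> \<le> bhattacharyya (Pi_pmf {..<Suc n} d (\<lambda>_. P)) (Pi_pmf {..<Suc n} d (\<lambda>_. Q))"
    unfolding Pi_Suc Pn_def[symmetric] Qn_def[symmetric]
    using fP fQ fPn fQn
    by (intro bhattacharyya_bind_ge_mult finite_set_bind_pmf bhattacharyya_map_pmf_ge) auto
  finally show ?case .
qed

lemma overlap_ge_bhattacharyya_sq:
  assumes "finite (set_pmf P)" "finite (set_pmf Q)"
  shows "(bhattacharyya P Q)\<^sup>2 / 2 \<le> overlap P Q"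
proof -
  define U where "U = set_pmf P \<union> set_pmf Q"
  define M where "M = (\<Sum>x\<in>U. max (pmf P x) (pmf Q x))"
  have "bhattacharyya P Q = (\<Sum>x\<in>U. sqrt (min (pmf P x) (pmf Q x) * max (pmf P x) (pmf Q x)))"
    unfolding bhattacharyya_def U_def[symmetric]
    by (intro sum.cong) (auto simp: min_def max_def mult.commute)
  also have "\<dots> \<le> sqrt (overlap P Q * M)"
    unfolding overlap_def U_def[symmetric] M_def by (intro sum_sqrt_mult_le) (auto simp: le_max_iff_disj)
  finally have BC_le: "bhattacharyya P Q \<le> sqrt (overlap P Q * M)" .
  have overlap_nonneg: "0 \<le> overlap P Q"
    unfolding overlap_def by (intro sum_nonneg) auto
  have "M \<le> (\<Sum>x\<in>U. pmf P x + pmf Q x)"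
    unfolding M_def by (intro sum_mono) auto
  also have "\<dots> = 2"
    using assms by (simp add: sum.distrib sum_pmf_eq_1 U_def)
  finally have "M \<le> 2" .
  moreover have "0 \<le> M"
    unfolding M_def by (intro sum_nonneg) (auto simp: le_max_iff_disj)
  ultimately have "overlap P Q * M \<le> overlap P Q * 2" "(sqrt (overlap P Q * M))\<^sup>2 = overlap P Q * M"
    using overlap_nonneg by (auto intro: mult_left_mono)
  moreover have "(bhattacharyya P Q)\<^sup>2 \<le> (sqrt (overlap P Q * M))\<^sup>2"
    using BC_le bhattacharyya_nonneg by (rule power_mono)
  ultimately show ?thesis by simp
qed

lemma overlap_le_prob_bind_add:
  assumes fP: "finite (set_pmf P)" and fQ: "finite (set_pmf Q)" and "E \<union> F = UNIV"
  shows "overlap P Q \<le> measure_pmf.prob (bind_pmf P K) E + measure_pmf.prob (bind_pmf Q K) F"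
proof -
  define U where "U = set_pmf P \<union> set_pmf Q"
  have fU: "finite U" using fP fQ U_def by auto
  have prob_P: "measure_pmf.prob (bind_pmf P K) E = (\<Sum>x\<in>U. pmf P x * measure_pmf.prob (K x) E)"
    unfolding prob_bind_pmf_finite[OF fP] using fU
    by (intro sum.mono_neutral_left) (auto simp: U_def set_pmf_iff)
  have prob_Q: "measure_pmf.prob (bind_pmf Q K) F = (\<Sum>x\<in>U. pmf Q x * measure_pmf.prob (K x) F)"
    unfolding prob_bind_pmf_finite[OF fQ] using fU
    by (intro sum.mono_neutral_left) (auto simp: U_def set_pmf_iff)
  have "min (pmf P x) (pmf Q x) \<le> pmf P x * measure_pmf.prob (K x) E + pmf Q x * measure_pmf.prob (K x) F"
    for x
  proof -
    have "1 = measure_pmf.prob (K x) (E \<union> F)"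
      using assms(3) by simp
    also have "\<dots> \<le> measure_pmf.prob (K x) E + measure_pmf.prob (K x) F"
      by (rule measure_Un_le) auto
    finally have covered: "1 \<le> measure_pmf.prob (K x) E + measure_pmf.prob (K x) F" .
    have "min (pmf P x) (pmf Q x) \<le> min (pmf P x) (pmf Q x) * (measure_pmf.prob (K x) E + measure_pmf.prob (K x) F)"
      using mult_left_mono[OF covered, of "min (pmf P x) (pmf Q x)"] by simp
    also have "\<dots> \<le> pmf P x * measure_pmf.prob (K x) E + pmf Q x * measure_pmf.prob (K x) F"
      unfolding distrib_left by (intro add_mono mult_right_mono) auto
    finally show ?thesis .
  qed
  then have "overlap P Q \<le> (\<Sum>x\<in>U. pmf P x * measure_pmf.prob (K x) E + pmf Q x * measure_pmf.prob (K x) F)"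
    unfolding overlap_def U_def[symmetric] by (intro sum_mono)
  then show ?thesis unfolding prob_P prob_Q sum.distrib .
qed

definition flip_pmf :: "'a \<Rightarrow> 'a \<Rightarrow> real \<Rightarrow> 'a pmf" where
  "flip_pmf u v q = map_pmf (\<lambda>b. if b then u else v) (bernoulli_pmf q)"

lemma pmf_flip_pmf:
  assumes "0 \<le> q" "q \<le> 1"
  shows "pmf (flip_pmf u v q) w = (if w = u then q else 0) + (if w = v then 1 - q else 0)"
  unfolding flip_pmf_def map_pmf_def using assms
  by (subst pmf_bind_finite[of UNIV]) (auto simp: UNIV_bool pmf_return indicator_def)

lemma set_flip_pmf: "set_pmf (flip_pmf u v q) \<subseteq> {u, v}"
  unfolding flip_pmf_def by auto

lemma expectation_flip_pmf:
  fixes f :: "'a \<Rightarrow> real"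
  assumes "0 \<le> q" "q \<le> 1"
  shows "measure_pmf.expectation (flip_pmf u v q) f = q * f u + (1 - q) * f v"
  unfolding flip_pmf_def using assms by (simp add: mult.commute)

text \<open>Each move \<open>s \<rightarrow> p s\<close> is balanced by the equally likely move \<open>p s \<rightarrow> s\<close>.\<close>

lemma pmf_of_set_flip_pmf_stationary:
  assumes X: "finite X" "X \<noteq> {}" and p: "\<And>s. s \<in> X \<Longrightarrow> p s \<in> X" "\<And>s. p (p s) = s"
    and q: "\<And>s. q (p s) = q s" "\<And>s. 0 \<le> q s" "\<And>s. q s \<le> 1"
  shows "bind_pmf (pmf_of_set X) (\<lambda>s. flip_pmf (p s) s (q s)) = pmf_of_set X"
proof (rule pmf_eqI)
  fix w
  have "w = p s \<longleftrightarrow> s = p w" for s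
    using p(2) by metis
  then have "(\<Sum>s\<in>X. pmf (flip_pmf (p s) s (q s)) w)
      = (\<Sum>s\<in>X. if s = p w then q s else 0) + (\<Sum>s\<in>X. if w = s then 1 - q s else 0)"
    using q by (simp add: pmf_flip_pmf sum.distrib)
  also have "\<dots> = (if w \<in> X then 1 else 0)"
    using X p q(1) by (simp add: sum.delta sum.delta') metis
  finally show "pmf (bind_pmf (pmf_of_set X) (\<lambda>s. flip_pmf (p s) s (q s))) w = pmf (pmf_of_set X) w"
    using X by (simp add: pmf_bind_pmf_of_set indicator_def)
qed

lemma bhattacharyya_flip_pmf_ge:
  fixes q d :: real
  assumes "0 < q" "q \<le> 1 / 2" "0 \<le> d" "d < q" and p: "{p1, p2} = {q + d, q - d}"
  shows "1 - 2 * d\<^sup>2 / q \<le> bhattacharyya (flip_pmf u v p1) (flip_pmf u v p2)"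
proof -
  have cases: "(p1 = q + d \<and> p2 = q - d) \<or> (p1 = q - d \<and> p2 = q + d)"
    using p by (auto simp: doubleton_eq_iff)
  then have "0 < p1" "p1 < 1" "0 < p2" "p2 < 1" using assms by auto
  then have "sqrt (p1 * p2) + sqrt ((1 - p1) * (1 - p2))
             \<le> bhattacharyya (flip_pmf u v p1) (flip_pmf u v p2)"
    using bhattacharyya_bind_ge[of "bernoulli_pmf p1" "bernoulli_pmf p2"
        "\<lambda>b. return_pmf (if b then u else v)" "\<lambda>b. return_pmf (if b then u else v)"]
    by (simp add: flip_pmf_def map_pmf_def bhattacharyya_self UNIV_bool)
  moreover have "p1 * p2 = q\<^sup>2 - d\<^sup>2" "(1 - p1) * (1 - p2) = (1 - q)\<^sup>2 - d\<^sup>2"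
    using cases by (auto simp: power2_eq_square algebra_simps)
  moreover have "q - d\<^sup>2 / q \<le> sqrt (q\<^sup>2 - d\<^sup>2)" "(1 - q) - d\<^sup>2 / (1 - q) \<le> sqrt ((1 - q)\<^sup>2 - d\<^sup>2)"
    using assms by (auto intro!: sqrt_diff_square_ge)
  moreover have "d\<^sup>2 / (1 - q) \<le> d\<^sup>2 / q"
    using assms by (intro divide_left_mono) auto
  ultimately show ?thesis by simp
qed

section \<open>Expected sojourn times\<close>

text \<open>\<open>stay_time Q t k\<close> is the expected number of the next \<open>k\<close> steps, starting at time \<open>t\<close>,
  spent in a state that is left at time \<open>t'\<close> with probability \<open>Q t'\<close> and never re-entered.\<close>

fun stay_time :: "(nat \<Rightarrow> real) \<Rightarrow> nat \<Rightarrow> nat \<Rightarrow> real" where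
  "stay_time Q t 0 = 0"
| "stay_time Q t (Suc k) = 1 + (1 - Q t) * stay_time Q (Suc t) k"

lemma stay_time_nonneg: "(\<And>t. Q t \<le> 1) \<Longrightarrow> 0 \<le> stay_time Q t k"
  by (induction k arbitrary: t) auto

lemma stay_time_antimono:
  assumes "\<And>t. Q1 t \<le> Q2 t" "\<And>t. Q2 t \<le> 1"
  shows "stay_time Q2 t k \<le> stay_time Q1 t k"
proof (induction k arbitrary: t)
  case (Suc k)
  have "0 \<le> stay_time Q2 (Suc t) k"
    using assms by (intro stay_time_nonneg)
  then have "(1 - Q2 t) * stay_time Q2 (Suc t) k \<le> (1 - Q1 t) * stay_time Q2 (Suc t) k"
    using assms(1)[of t] by (intro mult_right_mono) auto
  also have "\<dots> \<le> (1 - Q1 t) * stay_time Q1 (Suc t) k"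
    using assms[of t] Suc.IH[of "Suc t"] by (intro mult_left_mono) auto
  finally show ?case by simp
qed simp

lemma stay_time_const: "stay_time (\<lambda>_. 1 - b) t k = (\<Sum>j<k. b ^ j)"
  by (induction k arbitrary: t) (simp_all add: sum.lessThan_Suc_shift sum_distrib_left del: sum.lessThan_Suc)

lemma stay_time_sq_le_mult:
  assumes "\<And>t. Q1 t \<le> 1" "\<And>t. Q2 t \<le> 1" "\<And>t. b\<^sup>2 \<le> (1 - Q1 t) * (1 - Q2 t)" "0 \<le> b"
  shows "(stay_time (\<lambda>_. 1 - b) t k)\<^sup>2 \<le> stay_time Q1 t k * stay_time Q2 t k"
proof (induction k arbitrary: t)
  case (Suc k)
  define x where "x = stay_time Q1 (Suc t) k"
  define y where "y = stay_time Q2 (Suc t) k"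
  define z where "z = stay_time (\<lambda>_. 1 - b) (Suc t) k"
  define p where "p = 1 - Q1 t"
  define q where "q = 1 - Q2 t"
  have nonneg: "0 \<le> x" "0 \<le> y" "0 \<le> z" "0 \<le> p" "0 \<le> q"
    using assms unfolding x_def y_def z_def p_def q_def by (auto intro!: stay_time_nonneg)
  have "(b * z)\<^sup>2 = b\<^sup>2 * z\<^sup>2" by (simp add: power_mult_distrib)
  also have "\<dots> \<le> (p * q) * (x * y)"
    using assms(3)[of t] Suc.IH[of "Suc t"] nonneg
    unfolding x_def y_def z_def p_def q_def by (intro mult_mono) auto
  finally have prod: "(b * z)\<^sup>2 \<le> (p * x) * (q * y)" by (simp add: mult_ac)
  then have "2 * (b * z) \<le> p * x + q * y"
    using nonneg assms(4) by (intro double_le_add_of_square_le_mult) auto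
  then have "(1 + b * z)\<^sup>2 \<le> (1 + p * x) * (1 + q * y)"
    using prod by (simp add: power2_eq_square algebra_simps)
  then show ?case unfolding x_def y_def z_def p_def q_def by simp
qed simp

definition reward_sum :: "episode \<Rightarrow> real" where
  "reward_sum \<tau> = sum_list (map (\<lambda>(s, a, r). r) \<tau>)"

definition rewards_bounded :: "mdp \<Rightarrow> bool" where
  "rewards_bounded M \<longleftrightarrow> (\<forall>t s a. 0 \<le> rew M t s a \<and> rew M t s a \<le> 1)"

definition traj_value :: "mdp \<Rightarrow> policy \<Rightarrow> nat \<Rightarrow> nat \<Rightarrow> nat \<Rightarrow> real" where
  "traj_value M \<pi> t s k = measure_pmf.expectation (traj M \<pi> t s k) reward_sum"

lemma reward_sum_Nil [simp]: "reward_sum [] = 0"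
  and reward_sum_Cons [simp]: "reward_sum ((s, a, r) # \<tau>) = r + reward_sum \<tau>"
  by (simp_all add: reward_sum_def)

lemma reward_sum_traj_bounds:
  assumes "rewards_bounded M" "\<tau> \<in> set_pmf (traj M \<pi> t s k)"
  shows "0 \<le> reward_sum \<tau> \<and> reward_sum \<tau> \<le> real k"
  using assms(2)
proof (induction k arbitrary: t s \<tau>)
  case (Suc k)
  then obtain a s' \<tau>' where \<tau>: "\<tau> = (s, a, rew M t s a) # \<tau>'" "\<tau>' \<in> set_pmf (traj M \<pi> (Suc t) s' k)"
    by auto
  have "0 \<le> rew M t s a" "rew M t s a \<le> 1"
    using assms(1) by (auto simp: rewards_bounded_def)
  moreover have "0 \<le> reward_sum \<tau>' \<and> reward_sum \<tau>' \<le> real k"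
    using Suc.IH \<tau>(2) by blast
  ultimately show ?case
    using \<tau>(1) by auto
qed simp

lemma abs_reward_sum_traj_le:
  "rewards_bounded M \<Longrightarrow> \<tau> \<in> set_pmf (traj M \<pi> t s k) \<Longrightarrow> \<bar>reward_sum \<tau>\<bar> \<le> real k"
  using reward_sum_traj_bounds by fastforce

lemma integrable_reward_sum_traj:
  "rewards_bounded M \<Longrightarrow> integrable (measure_pmf (traj M \<pi> t s k)) reward_sum"
  by (intro integrable_measure_pmf_bounded[where B="real k"] abs_reward_sum_traj_le)

lemma traj_value_bounds:
  assumes "rewards_bounded M"
  shows "0 \<le> traj_value M \<pi> t s k \<and> traj_value M \<pi> t s k \<le> real k"
proof -
  have "traj_value M \<pi> t s k \<le> measure_pmf.expectation (traj M \<pi> t s k) (\<lambda>_. real k)"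
    unfolding traj_value_def using reward_sum_traj_bounds[OF assms] integrable_reward_sum_traj[OF assms]
    by (intro integral_mono_AE) (auto simp: AE_measure_pmf_iff)
  moreover have "0 \<le> traj_value M \<pi> t s k"
    unfolding traj_value_def using reward_sum_traj_bounds[OF assms]
    by (intro integral_nonneg_AE) (auto simp: AE_measure_pmf_iff)
  ultimately show ?thesis by simp
qed

lemma traj_value_0 [simp]: "traj_value M \<pi> t s 0 = 0"
  by (simp add: traj_value_def)

lemma traj_value_Suc:
  assumes bounded: "rewards_bounded M"
  shows "traj_value M \<pi> t s (Suc k) = measure_pmf.expectation (\<pi> t s) (\<lambda>a. rew M t s a +
           measure_pmf.expectation (trans M s a) (\<lambda>s'. traj_value M \<pi> (Suc t) s' k))"
proof -
  define step where
    "step a = bind_pmf (trans M s a) (\<lambda>s'. map_pmf ((#) (s, a, rew M t s a)) (traj M \<pi> (Suc t) s' k))" for a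
  have traj_Suc: "traj M \<pi> t s (Suc k) = bind_pmf (\<pi> t s) step"
    by (simp add: step_def[abs_def])
  have step_value: "measure_pmf.expectation (step a) reward_sum
      = rew M t s a + measure_pmf.expectation (trans M s a) (\<lambda>s'. traj_value M \<pi> (Suc t) s' k)"
    if "a \<in> set_pmf (\<pi> t s)" for a
  proof -
    have "measure_pmf.expectation (step a) reward_sum
        = measure_pmf.expectation (trans M s a) (\<lambda>s'. rew M t s a + traj_value M \<pi> (Suc t) s' k)"
      unfolding step_def
      using that abs_reward_sum_traj_le[OF bounded, of _ \<pi> t s "Suc k"]
      by (subst expectation_bind_pmf[where B="real (Suc k)"])
         (auto intro!: Bochner_Integration.integral_cong
               simp: traj_value_def integrable_reward_sum_traj[OF bounded])
    also have "\<dots> = rew M t s a + measure_pmf.expectation (trans M s a) (\<lambda>s'. traj_value M \<pi> (Suc t) s' k)"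
      using traj_value_bounds[OF bounded]
      by (simp add: integrable_measure_pmf_bounded[where B="real k"] abs_le_iff)
    finally show ?thesis .
  qed
  have "traj_value M \<pi> t s (Suc k) = measure_pmf.expectation (\<pi> t s) (\<lambda>a. measure_pmf.expectation (step a) reward_sum)"
    unfolding traj_value_def traj_Suc
    using abs_reward_sum_traj_le[OF bounded, of _ \<pi> t s "Suc k", unfolded traj_Suc]
    by (rule expectation_bind_pmf[where B="real (Suc k)"])
  also have "\<dots> = measure_pmf.expectation (\<pi> t s) (\<lambda>a. rew M t s a +
           measure_pmf.expectation (trans M s a) (\<lambda>s'. traj_value M \<pi> (Suc t) s' k))"
    using step_value by (intro integral_cong_AE) (auto simp: AE_measure_pmf_iff)
  finally show ?thesis .
qed

lemma pol_value_eq_expectation_traj_value: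
  assumes "rewards_bounded M"
  shows "pol_value M H \<pi> = measure_pmf.expectation (init M) (\<lambda>s. traj_value M \<pi> 1 s H)"
proof -
  have reward_sum_eq: "(\<lambda>\<tau>. sum_list (map (\<lambda>(s, a, r). r) \<tau>)) = reward_sum"
    by (simp add: reward_sum_def fun_eq_iff)
  show ?thesis
    unfolding pol_value_def episode_pmf_def traj_value_def reward_sum_eq
    by (intro expectation_bind_pmf[where B="real H"]) (auto intro: abs_reward_sum_traj_le[OF assms])
qed

lemma finite_set_traj:
  assumes "\<And>t s. finite (set_pmf (\<pi> t s))" "\<And>s a. finite (set_pmf (trans M s a))"
  shows "finite (set_pmf (traj M \<pi> t s k))"
proof (induction k arbitrary: t s)
  case (Suc k)
  show ?case
    unfolding traj.simps by (intro finite_set_bind_pmf assms) (auto intro: Suc.IH)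
qed simp

lemma state_action_law_stationary:
  assumes \<pi>: "\<And>t s. \<pi> t s = p" and invariant: "\<And>a. bind_pmf \<nu> (\<lambda>s. trans M s a) = \<nu>"
  shows "j < k \<Longrightarrow> map_pmf (\<lambda>\<tau>. (fst (\<tau> ! j), fst (snd (\<tau> ! j)))) (bind_pmf \<nu> (\<lambda>s. traj M \<pi> t s k))
           = pair_pmf \<nu> p"
proof (induction j arbitrary: t k)
  case 0
  then obtain k' where k: "k = Suc k'" by (cases k) auto
  have "map_pmf (\<lambda>\<tau>. (fst (\<tau> ! 0), fst (snd (\<tau> ! 0)))) (bind_pmf \<nu> (\<lambda>s. traj M \<pi> t s k))
      = bind_pmf \<nu> (\<lambda>s. bind_pmf p (\<lambda>a. bind_pmf (trans M s a) (\<lambda>s'. return_pmf (s, a))))"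
    unfolding k traj.simps \<pi> by (simp add: map_bind_pmf map_pmf_comp map_pmf_const)
  then show ?case
    by (simp add: pair_pmf_def bind_pmf_const)
next
  case (Suc j)
  then obtain k' where k: "k = Suc k'" and "j < k'" by (cases k) auto
  define f where "f = (\<lambda>\<tau>::episode. (fst (\<tau> ! j), fst (snd (\<tau> ! j))))"
  have "map_pmf (\<lambda>\<tau>. (fst (\<tau> ! Suc j), fst (snd (\<tau> ! Suc j)))) (bind_pmf \<nu> (\<lambda>s. traj M \<pi> t s k))
      = bind_pmf \<nu> (\<lambda>s. bind_pmf p (\<lambda>a. bind_pmf (trans M s a) (\<lambda>s'. map_pmf f (traj M \<pi> (Suc t) s' k'))))"
    unfolding k traj.simps \<pi> by (simp add: map_bind_pmf map_pmf_comp f_def)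
  also have "\<dots> = bind_pmf (bind_pmf \<nu> (\<lambda>s. bind_pmf p (trans M s))) (\<lambda>s'. map_pmf f (traj M \<pi> (Suc t) s' k'))"
    by (simp add: bind_assoc_pmf)
  also have "bind_pmf \<nu> (\<lambda>s. bind_pmf p (trans M s)) = bind_pmf p (\<lambda>a. bind_pmf \<nu> (\<lambda>s. trans M s a))"
    by (rule bind_commute_pmf)
  also have "\<dots> = \<nu>"
    by (simp add: invariant bind_pmf_const)
  also have "bind_pmf \<nu> (\<lambda>s'. map_pmf f (traj M \<pi> (Suc t) s' k')) = pair_pmf \<nu> p"
    using Suc.IH[OF \<open>j < k'\<close>] by (simp add: f_def map_bind_pmf)
  finally show ?case .
qed

section \<open>The hard instances\<close>

locale hard_instance =
  fixes S A H :: nat and dm \<delta> :: real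
  assumes S_ge: "S \<ge> 3" and A_ge: "A \<ge> 3" and H_ge: "H \<ge> 2"
    and dm_pos: "0 < dm" and dm_le: "dm \<le> 1 / (real S * real A)"
    and \<delta>_pos: "0 < \<delta>" and \<delta>_le: "\<delta> \<le> 1 / (8 * real H)"

begin

text \<open>States \<open>2 * i\<close> and \<open>2 * i + 1\<close> (\<open>i < m\<close>) form pair \<open>i\<close>: the even state pays reward 0,
  the odd one reward 1, and the states from \<open>2 * m\<close> on are absorbing with reward 0. Actions 1
  and 2 cross to the other state of the pair with probability \<open>q0 \<plusminus> \<delta>\<close>, the sign being given
  by \<open>i \<in> \<sigma>\<close>; every other action stays put.\<close>

definition m :: nat where "m = S div 2"

definition q0 :: real where "q0 = 1 / (4 * real H)"

definition \<theta> :: real where "\<theta> = real S * dm"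

definition partner :: "nat \<Rightarrow> nat" where
  "partner s = (if s < 2 * m then (if even s then s + 1 else s - 1) else s)"

definition move_prob :: "bool \<Rightarrow> nat \<Rightarrow> real" where
  "move_prob b a = (if a = 1 then (if b then q0 + \<delta> else q0 - \<delta>)
                    else if a = 2 then (if b then q0 - \<delta> else q0 + \<delta>) else 0)"

definition move_prob_at :: "nat set \<Rightarrow> nat \<Rightarrow> nat \<Rightarrow> real" where
  "move_prob_at \<sigma> s a = (if s < 2 * m then move_prob (s div 2 \<in> \<sigma>) a else 0)"

definition hard_trans :: "nat set \<Rightarrow> nat \<Rightarrow> nat \<Rightarrow> nat pmf" where
  "hard_trans \<sigma> s a = flip_pmf (partner s) s (move_prob_at \<sigma> s a)"

definition hard_rew :: "nat \<Rightarrow> nat \<Rightarrow> nat \<Rightarrow> real" where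
  "hard_rew t s a = (if s < 2 * m \<and> odd s then 1 else 0)"

definition init_unif :: "nat pmf" where
  "init_unif = pmf_of_set {..<S}"

definition hard_mdp :: "nat set \<Rightarrow> mdp" where
  "hard_mdp \<sigma> = \<lparr>init = init_unif, trans = hard_trans \<sigma>, rew = hard_rew\<rparr>"

definition behaviour_action :: "nat pmf" where
  "behaviour_action = bind_pmf (bernoulli_pmf (2 * \<theta>))
     (\<lambda>b. if b then pmf_of_set {1, 2} else pmf_of_set ({..<A} - {1, 2}))"

definition behaviour :: policy where
  "behaviour = (\<lambda>t s. behaviour_action)"

definition opt_policy :: "nat set \<Rightarrow> policy" where
  "opt_policy \<sigma> = (\<lambda>t s. return_pmf (if s < 2 * m \<and> even s then (if s div 2 \<in> \<sigma> then 1 else 2) else 0))"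

lemma m_bounds: "real S / 3 \<le> real m" "1 \<le> m" "2 * m \<le> S"
  using S_ge unfolding m_def by linarith+

lemma q0_pos: "0 < q0" and q0_le: "q0 \<le> 1 / 8"
  using H_ge unfolding q0_def by (auto simp: field_simps)

lemma \<delta>_le_half_q0: "\<delta> \<le> q0 / 2"
  using \<delta>_le unfolding q0_def by (simp add: field_simps)

lemma move_prob_bounds: "0 \<le> move_prob b a" "move_prob b a \<le> q0 + \<delta>" "move_prob b a \<le> 1"
  using q0_pos q0_le \<delta>_le_half_q0 \<delta>_pos unfolding move_prob_def by auto

lemma move_prob_at_bounds: "0 \<le> move_prob_at \<sigma> s a" "move_prob_at \<sigma> s a \<le> q0 + \<delta>" "move_prob_at \<sigma> s a \<le> 1"
  using move_prob_bounds q0_pos \<delta>_pos unfolding move_prob_at_def by auto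

lemma \<theta>_bounds: "0 < \<theta>" "\<theta> * real A \<le> 1" "\<theta> \<le> 1 / 3"
proof -
  show "0 < \<theta>" using dm_pos S_ge unfolding \<theta>_def by auto
  show "\<theta> * real A \<le> 1" using dm_le S_ge A_ge unfolding \<theta>_def by (simp add: field_simps)
  moreover have "\<theta> * 3 \<le> \<theta> * real A" using A_ge \<open>0 < \<theta>\<close> by (intro mult_left_mono) auto
  ultimately show "\<theta> \<le> 1 / 3" by linarith
qed

lemma partner_less: "s < S \<Longrightarrow> partner s < S"
  using m_bounds(3) unfolding partner_def by (simp split: if_split; presburger)

lemma partner_partner [simp]: "partner (partner s) = s"
  unfolding partner_def by (simp split: if_split; presburger)

lemma partner_same_pair: "s < 2 * m \<Longrightarrow> partner s div 2 = s div 2 \<and> partner s < 2 * m \<and> partner s \<noteq> s"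
  unfolding partner_def by (simp split: if_split; presburger)

lemma move_prob_at_partner: "move_prob_at \<sigma> (partner s) a = move_prob_at \<sigma> s a"
  using partner_same_pair[of s] unfolding move_prob_at_def by (auto simp: partner_def)

lemma set_hard_trans: "set_pmf (hard_trans \<sigma> s a) \<subseteq> {partner s, s}"
  unfolding hard_trans_def by (rule set_flip_pmf)

lemma finite_set_hard_trans: "finite (set_pmf (hard_trans \<sigma> s a))"
  using set_hard_trans by (rule finite_subset) auto

lemma set_init_unif: "set_pmf init_unif = {..<S}"
  and pmf_init_unif: "pmf init_unif s = (if s < S then 1 / real S else 0)"
  using S_ge by (auto simp: init_unif_def lessThan_empty_iff)

lemma pmf_behaviour_action:
  "pmf behaviour_action a = (if a \<in> {1, 2} then \<theta> else if a < A then (1 - 2 * \<theta>) / (real A - 2) else 0)"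
proof -
  have "0 \<in> {..<A} - {1, 2::nat}" "card ({..<A} - {1, 2::nat}) = A - 2"
    using A_ge by (auto simp: card_Diff_subset)
  then have "{..<A} - {1, 2::nat} \<noteq> {}" "card ({..<A} - {1, 2::nat}) = A - 2"
    by blast+
  moreover have "0 \<le> 2 * \<theta>" "2 * \<theta> \<le> 1" using \<theta>_bounds by auto
  ultimately show ?thesis
    unfolding behaviour_action_def using A_ge
    by (subst pmf_bind_finite[of UNIV]) (auto simp: UNIV_bool indicator_def of_nat_diff)
qed

lemma set_behaviour_action: "set_pmf behaviour_action \<subseteq> {..<A}"
  using \<theta>_bounds A_ge by (auto simp: set_pmf_iff pmf_behaviour_action split: if_splits)

lemma finite_set_behaviour_action: "finite (set_pmf behaviour_action)"
  using set_behaviour_action by (rule finite_subset) auto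

lemma pmf_behaviour_action_ge: "a < A \<Longrightarrow> \<theta> \<le> pmf behaviour_action a"
  using \<theta>_bounds A_ge by (auto simp: pmf_behaviour_action field_simps)

lemma init_unif_stationary: "bind_pmf init_unif (\<lambda>s. hard_trans \<sigma> s a) = init_unif"
  unfolding init_unif_def hard_trans_def using S_ge
  by (intro pmf_of_set_flip_pmf_stationary)
     (auto simp: lessThan_empty_iff partner_less move_prob_at_partner move_prob_at_bounds)

lemma hard_mdp_simps [simp]:
  "init (hard_mdp \<sigma>) = init_unif" "trans (hard_mdp \<sigma>) = hard_trans \<sigma>" "rew (hard_mdp \<sigma>) = hard_rew"
  by (simp_all add: hard_mdp_def)

lemma rewards_bounded_hard_mdp: "rewards_bounded (hard_mdp \<sigma>)"
  unfolding rewards_bounded_def by (simp add: hard_rew_def)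

lemma valid_hard_mdp: "valid_mdp S A H (hard_mdp \<sigma>)"
  using set_hard_trans partner_less unfolding valid_mdp_def
  by (fastforce simp: set_init_unif hard_rew_def)

lemma valid_behaviour: "valid_policy S A H behaviour"
  unfolding valid_policy_def behaviour_def using set_behaviour_action by auto

lemma valid_opt_policy: "valid_policy S A H (opt_policy \<sigma>)"
  unfolding valid_policy_def opt_policy_def using A_ge by auto

text \<open>The uniform initial law is stationary, so every occupancy is \<open>pmf behaviour_action a / S\<close>.\<close>

lemma occupancy_hard_mdp_ge:
  assumes "t \<in> {1..H}" "s < S" "a < A"
  shows "dm \<le> occupancy (hard_mdp \<sigma>) behaviour H t s a"
proof -
  define f where "f = (\<lambda>\<tau>::episode. (fst (\<tau> ! (t - 1)), fst (snd (\<tau> ! (t - 1)))))"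
  have law: "map_pmf f (episode_pmf (hard_mdp \<sigma>) behaviour H) = pair_pmf init_unif behaviour_action"
    unfolding f_def episode_pmf_def hard_mdp_simps using assms(1)
    by (intro state_action_law_stationary) (auto simp: behaviour_def init_unif_stationary)
  have "occupancy (hard_mdp \<sigma>) behaviour H t s a
      = measure_pmf.prob (map_pmf f (episode_pmf (hard_mdp \<sigma>) behaviour H)) {(s, a)}"
    unfolding occupancy_def f_def by (simp add: vimage_def)
  also have "\<dots> = pmf (pair_pmf init_unif behaviour_action) (s, a)"
    unfolding law by (simp add: measure_pmf_single)
  also have "\<dots> = pmf behaviour_action a / real S"
    using assms(2) by (simp add: pmf_pair pmf_init_unif)
  also have "\<dots> \<ge> \<theta> / real S"
    using pmf_behaviour_action_ge[OF assms(3)] by (simp add: divide_right_mono)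
  finally show ?thesis
    using S_ge by (simp add: \<theta>_def)
qed

lemma hard_instance_in_class: "(behaviour, hard_mdp \<sigma>) \<in> class_dm S A H dm"
  unfolding class_dm_def using valid_hard_mdp valid_behaviour occupancy_hard_mdp_ge by auto

definition leave_prob :: "nat set \<Rightarrow> policy \<Rightarrow> nat \<Rightarrow> nat \<Rightarrow> real" where
  "leave_prob \<sigma> \<pi> s t = measure_pmf.expectation (\<pi> t s) (move_prob_at \<sigma> s)"

lemma leave_prob_bounds: "0 \<le> leave_prob \<sigma> \<pi> s t" "leave_prob \<sigma> \<pi> s t \<le> q0 + \<delta>"
  unfolding leave_prob_def
  using expectation_pmf_bounds[where f="move_prob_at \<sigma> s" and c="q0 + \<delta>"] move_prob_at_bounds by auto

lemma leave_prob_le_one: "leave_prob \<sigma> \<pi> s t \<le> 1"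
  using leave_prob_bounds(2)[of \<sigma> \<pi> s t] q0_le \<delta>_le_half_q0 by linarith

lemma expectation_hard_trans:
  "measure_pmf.expectation (hard_trans \<sigma> s a) f
     = move_prob_at \<sigma> s a * f (partner s) + (1 - move_prob_at \<sigma> s a) * f s"
  unfolding hard_trans_def by (rule expectation_flip_pmf) (use move_prob_at_bounds in auto)

lemma traj_value_absorbing: "2 * m \<le> s \<Longrightarrow> traj_value (hard_mdp \<sigma>) \<pi> t s k = 0"
proof (induction k arbitrary: t)
  case (Suc k)
  then have "partner s = s" "hard_rew t s a = 0" for a
    by (simp_all add: partner_def hard_rew_def)
  then show ?case
    by (simp add: traj_value_Suc[OF rewards_bounded_hard_mdp] expectation_hard_trans Suc.IH[OF Suc.prems])
qed simp

lemma partner_even: "s < 2 * m \<Longrightarrow> even s \<Longrightarrow> partner s = s + 1"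
  unfolding partner_def by simp

lemma traj_value_even_Suc:
  assumes "s < 2 * m" "even s"
  shows "traj_value (hard_mdp \<sigma>) \<pi> t s (Suc k)
           = leave_prob \<sigma> \<pi> s t * traj_value (hard_mdp \<sigma>) \<pi> (Suc t) (s + 1) k
             + (1 - leave_prob \<sigma> \<pi> s t) * traj_value (hard_mdp \<sigma>) \<pi> (Suc t) s k"
proof -
  define V_odd where "V_odd = traj_value (hard_mdp \<sigma>) \<pi> (Suc t) (s + 1) k"
  define V_even where "V_even = traj_value (hard_mdp \<sigma>) \<pi> (Suc t) s k"
  have "hard_rew t s a = 0" for a
    using assms by (simp add: hard_rew_def)
  then have "traj_value (hard_mdp \<sigma>) \<pi> t s (Suc k)
      = measure_pmf.expectation (\<pi> t s) (\<lambda>a. V_even + move_prob_at \<sigma> s a * (V_odd - V_even))"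
    by (simp add: traj_value_Suc[OF rewards_bounded_hard_mdp] expectation_hard_trans
        partner_even[OF assms] V_odd_def V_even_def algebra_simps)
  also have "\<dots> = V_even + leave_prob \<sigma> \<pi> s t * (V_odd - V_even)"
    unfolding leave_prob_def
    using integrable_measure_pmf_bounded[of "\<pi> t s" "move_prob_at \<sigma> s" 1] move_prob_at_bounds
    by simp
  finally show ?thesis
    unfolding V_odd_def V_even_def by (simp add: algebra_simps)
qed

lemma traj_value_even_le:
  assumes "s < 2 * m" "even s"
  shows "traj_value (hard_mdp \<sigma>) \<pi> t s k \<le> real k - stay_time (leave_prob \<sigma> \<pi> s) t k"
proof (induction k arbitrary: t)
  case (Suc k)
  define Q where "Q = leave_prob \<sigma> \<pi> s t"
  have "0 \<le> Q" "Q \<le> 1"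
    unfolding Q_def using leave_prob_bounds(1) leave_prob_le_one by auto
  moreover have "traj_value (hard_mdp \<sigma>) \<pi> (Suc t) (s + 1) k \<le> real k"
    using traj_value_bounds[OF rewards_bounded_hard_mdp] by blast
  ultimately have "Q * traj_value (hard_mdp \<sigma>) \<pi> (Suc t) (s + 1) k
        + (1 - Q) * traj_value (hard_mdp \<sigma>) \<pi> (Suc t) s k
      \<le> Q * real k + (1 - Q) * (real k - stay_time (leave_prob \<sigma> \<pi> s) (Suc t) k)"
    using Suc.IH[of "Suc t"] by (intro add_mono mult_left_mono) auto
  then show ?case
    unfolding traj_value_even_Suc[OF assms] Q_def by (simp add: algebra_simps)
qed simp

lemma traj_value_opt_odd:
  assumes "s < 2 * m" "odd s"
  shows "traj_value (hard_mdp \<sigma>) (opt_policy \<sigma>) t s k = real k"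
proof (induction k arbitrary: t)
  case (Suc k)
  have "hard_rew t s a = 1" "move_prob_at \<sigma> s 0 = 0" "opt_policy \<sigma> t s = return_pmf 0" for a
    using assms by (simp_all add: hard_rew_def move_prob_at_def move_prob_def opt_policy_def)
  then show ?case
    by (simp add: traj_value_Suc[OF rewards_bounded_hard_mdp] expectation_hard_trans Suc.IH)
qed simp

lemma traj_value_opt_even:
  assumes "s < 2 * m" "even s"
  shows "traj_value (hard_mdp \<sigma>) (opt_policy \<sigma>) t s k = real k - stay_time (\<lambda>_. q0 + \<delta>) t k"
proof (induction k arbitrary: t)
  case (Suc k)
  have "s + 1 < 2 * m" "odd (s + 1)"
    using assms by presburger+
  moreover have "leave_prob \<sigma> (opt_policy \<sigma>) s t = q0 + \<delta>"
    using assms by (simp add: leave_prob_def opt_policy_def move_prob_at_def move_prob_def)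
  ultimately show ?case
    using assms by (simp add: traj_value_even_Suc traj_value_opt_odd Suc.IH algebra_simps)
qed simp

lemma pol_value_hard_mdp: "pol_value (hard_mdp \<sigma>) H \<pi> = (\<Sum>s<S. traj_value (hard_mdp \<sigma>) \<pi> 1 s H) / real S"
  using S_ge
  by (simp add: pol_value_eq_expectation_traj_value[OF rewards_bounded_hard_mdp] init_unif_def
      integral_pmf_of_set lessThan_empty_iff)

lemma opt_value_ge_opt_policy: "pol_value (hard_mdp \<sigma>) H (opt_policy \<sigma>) \<le> opt_value S A H (hard_mdp \<sigma>)"
proof -
  have "pol_value (hard_mdp \<sigma>) H \<pi> \<le> real H" for \<pi>
  proof -
    have "(\<Sum>s<S. traj_value (hard_mdp \<sigma>) \<pi> 1 s H) \<le> (\<Sum>s<S. real H)"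
      using traj_value_bounds[OF rewards_bounded_hard_mdp] by (intro sum_mono) auto
    then show ?thesis
      using S_ge by (simp add: pol_value_hard_mdp field_simps)
  qed
  then show ?thesis
    unfolding opt_value_def using valid_opt_policy
    by (intro cSUP_upper bdd_aboveI[where M="real H"]) auto
qed

text \<open>Up to the factor \<open>1 / S\<close>, a lower bound on the value that \<open>\<pi>\<close> loses in the even state
  of pair \<open>i\<close> when that pair has sign \<open>b\<close>.\<close>

definition pair_loss :: "nat \<Rightarrow> bool \<Rightarrow> policy \<Rightarrow> real" where
  "pair_loss i b \<pi> = stay_time (\<lambda>t. measure_pmf.expectation (\<pi> t (2 * i)) (move_prob b)) 1 H
                     - stay_time (\<lambda>_. q0 + \<delta>) 1 H"

lemma leave_prob_pair:
  "i < m \<Longrightarrow> leave_prob \<sigma> \<pi> (2 * i) = (\<lambda>t. measure_pmf.expectation (\<pi> t (2 * i)) (move_prob (i \<in> \<sigma>)))"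
  unfolding leave_prob_def move_prob_at_def by (auto simp: fun_eq_iff)

lemma stay_time_leave_prob_ge: "stay_time (\<lambda>_. q0 + \<delta>) t k \<le> stay_time (leave_prob \<sigma> \<pi> s) t k"
  using leave_prob_bounds(2) q0_le \<delta>_le_half_q0 by (intro stay_time_antimono) auto

lemma expectation_move_prob_bounds:
  "0 \<le> measure_pmf.expectation p (move_prob b)" "measure_pmf.expectation p (move_prob b) \<le> q0 + \<delta>"
  using expectation_pmf_bounds[where f="move_prob b" and c="q0 + \<delta>"] move_prob_bounds by auto

lemma pair_loss_nonneg: "0 \<le> pair_loss i b \<pi>"
  unfolding pair_loss_def using expectation_move_prob_bounds(2) q0_le \<delta>_le_half_q0
  by (simp add: stay_time_antimono)

lemma value_gap_ge:
  "(\<Sum>i<m. pair_loss i (i \<in> \<sigma>) \<pi>) / real S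
     \<le> pol_value (hard_mdp \<sigma>) H (opt_policy \<sigma>) - pol_value (hard_mdp \<sigma>) H \<pi>"
proof -
  define D where "D s = traj_value (hard_mdp \<sigma>) (opt_policy \<sigma>) 1 s H - traj_value (hard_mdp \<sigma>) \<pi> 1 s H" for s
  have D_even: "stay_time (leave_prob \<sigma> \<pi> s) 1 H - stay_time (\<lambda>_. q0 + \<delta>) 1 H \<le> D s"
    if "s < 2 * m" "even s" for s
    unfolding D_def traj_value_opt_even[OF that] using traj_value_even_le[OF that, of \<sigma> \<pi> 1 H] by linarith
  have D_nonneg: "0 \<le> D s" for s
  proof (cases "s < 2 * m")
    case True
    then show ?thesis
      using D_even[of s] stay_time_leave_prob_ge[of 1 H \<sigma> \<pi> s] traj_value_opt_odd[of s \<sigma> 1 H]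
        traj_value_bounds[OF rewards_bounded_hard_mdp, of \<sigma> \<pi> 1 s H]
      unfolding D_def by (cases "even s") auto
  qed (simp add: D_def traj_value_absorbing)
  have "(\<Sum>i<m. pair_loss i (i \<in> \<sigma>) \<pi>) \<le> (\<Sum>i<m. D (2 * i))"
  proof (intro sum_mono)
    fix i assume "i \<in> {..<m}"
    then show "pair_loss i (i \<in> \<sigma>) \<pi> \<le> D (2 * i)"
      using D_even[of "2 * i"] leave_prob_pair[of i \<sigma> \<pi>] by (simp add: pair_loss_def)
  qed
  also have "\<dots> = (\<Sum>s\<in>(*) 2 ` {..<m}. D s)"
    by (subst sum.reindex) (auto simp: inj_on_def)
  also have "\<dots> \<le> (\<Sum>s<S. D s)"
    using m_bounds(3) D_nonneg by (intro sum_mono2) auto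
  finally show ?thesis
    using S_ge divide_right_mono[of _ _ "real S"]
    by (simp add: pol_value_hard_mdp D_def sum_subtractf diff_divide_distrib[symmetric])
qed

lemma expectation_move_prob:
  "measure_pmf.expectation p (move_prob b) = move_prob b 1 * pmf p 1 + move_prob b 2 * pmf p 2"
proof -
  have "measure_pmf.expectation p (move_prob b) = (\<Sum>a\<in>{1, 2}. move_prob b a * pmf p a)"
    by (rule integral_measure_pmf_real) (auto simp: move_prob_def split: if_splits)
  then show ?thesis by simp
qed

lemma complement_move_probs_mult_ge:
  "(1 - q0 - \<delta> / 2)\<^sup>2
     \<le> (1 - measure_pmf.expectation p (move_prob True)) * (1 - measure_pmf.expectation p (move_prob False))"
proof -
  define \<alpha> where "\<alpha> = pmf p 1"
  define \<beta> where "\<beta> = pmf p 2"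
  define u where "u = 1 - q0 * (\<alpha> + \<beta>)"
  define d where "d = \<delta> * (\<alpha> - \<beta>)"
  have "\<alpha> + \<beta> = measure_pmf.prob p {1, 2}"
    unfolding \<alpha>_def \<beta>_def by (simp add: measure_measure_pmf_finite)
  then have "\<alpha> + \<beta> \<le> 1" by simp
  moreover have "0 \<le> \<alpha>" "0 \<le> \<beta>" unfolding \<alpha>_def \<beta>_def by auto
  ultimately have "1 - q0 \<le> u" "\<bar>d\<bar> \<le> \<delta>"
    using q0_pos \<delta>_pos by (auto simp: u_def d_def abs_mult mult_left_le)
  then have "(1 - q0)\<^sup>2 \<le> u\<^sup>2" "\<bar>d\<bar>\<^sup>2 \<le> \<delta>\<^sup>2"
    using q0_le by (intro power_mono; simp)+
  then have "(1 - q0)\<^sup>2 - \<delta>\<^sup>2 \<le> u\<^sup>2 - d\<^sup>2"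
    by simp
  moreover have "(1 - q0 - \<delta> / 2)\<^sup>2 \<le> (1 - q0)\<^sup>2 - \<delta>\<^sup>2"
  proof -
    have "\<delta> * (5 / 4 * \<delta>) \<le> \<delta> * (1 - q0)"
      using \<delta>_pos \<delta>_le_half_q0 q0_le by (intro mult_left_mono) auto
    then show ?thesis by (simp add: power2_eq_square algebra_simps)
  qed
  moreover have "u\<^sup>2 - d\<^sup>2 = (1 - measure_pmf.expectation p (move_prob True))
                             * (1 - measure_pmf.expectation p (move_prob False))"
    unfolding expectation_move_prob by (simp add: u_def d_def \<alpha>_def \<beta>_def move_prob_def power2_eq_square algebra_simps)
  ultimately show ?thesis by linarith
qed

definition \<kappa> :: real where "\<kappa> = \<delta> * real H * (real H - 1) / 4"

lemma pair_loss_add_ge: "\<kappa> \<le> pair_loss i True \<pi> + pair_loss i False \<pi>"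
proof -
  define Q where "Q b t = measure_pmf.expectation (\<pi> t (2 * i)) (move_prob b)" for b t
  define b where "b = 1 - q0 - \<delta> / 2"
  define g where "g = 1 - q0 - \<delta>"
  have Q_le: "Q c t \<le> 1" for c t
    unfolding Q_def using expectation_move_prob_bounds(2)[of "\<pi> t (2 * i)" c] q0_le \<delta>_le_half_q0 by linarith
  have bg: "0 \<le> g" "g \<le> b" "g \<le> 1"
    using q0_pos q0_le \<delta>_pos \<delta>_le_half_q0 by (auto simp: b_def g_def)
  have "(stay_time (\<lambda>_. 1 - b) 1 H)\<^sup>2 \<le> stay_time (Q True) 1 H * stay_time (Q False) 1 H"
    using Q_le bg complement_move_probs_mult_ge by (intro stay_time_sq_le_mult) (auto simp: Q_def b_def)
  then have "2 * (\<Sum>j<H. b ^ j) \<le> stay_time (Q True) 1 H + stay_time (Q False) 1 H"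
    using Q_le bg by (intro double_le_add_of_square_le_mult) (auto simp: stay_time_const stay_time_nonneg sum_nonneg)
  moreover have "stay_time (\<lambda>_. q0 + \<delta>) 1 H = (\<Sum>j<H. g ^ j)"
    using stay_time_const[of g] by (simp add: g_def)
  moreover have "1 / 2 \<le> g ^ H"
  proof -
    have "1 + (- (q0 + \<delta>)) = g"
      by (simp add: g_def)
    then have "1 + real H * (- (q0 + \<delta>)) \<le> g ^ H"
      using Bernoulli_inequality[of "- (q0 + \<delta>)" H] q0_le \<delta>_le_half_q0 by simp
    moreover have "real H * (q0 + \<delta>) \<le> real H * (3 / (8 * real H))"
      using \<delta>_le_half_q0 by (intro mult_left_mono) (auto simp: q0_def)
    ultimately show ?thesis
      using H_ge by (simp add: field_simps)
  qed
  then have "(b - g) * real H * (real H - 1) / 4 \<le> (\<Sum>j<H. b ^ j) - (\<Sum>j<H. g ^ j)"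
    using bg by (intro geometric_sum_diff_ge)
  ultimately show ?thesis
    unfolding pair_loss_def Q_def[symmetric] \<kappa>_def by (simp add: b_def g_def)
qed

lemma loss_threshold_ge: "\<delta> * (real H)\<^sup>2 / 1536 \<le> real m * \<kappa> / (64 * real S)"
proof -
  have "real S / 3 * (\<delta> * (real H)\<^sup>2 / 8) \<le> real m * \<kappa>"
    using m_bounds(1) H_ge \<delta>_pos by (intro mult_mono) (auto simp: \<kappa>_def power2_eq_square field_simps)
  then show ?thesis
    using S_ge by (simp add: field_simps)
qed

subsection \<open>Indistinguishability of neighbouring instances\<close>

definition bc_gap :: real where "bc_gap = 2 * \<delta>\<^sup>2 / q0"

lemma bc_gap_bounds: "0 \<le> bc_gap" "bc_gap \<le> 1"
proof -
  have "\<delta> * \<delta> \<le> (q0 / 2) * (1 / 16)"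
    using \<delta>_pos \<delta>_le_half_q0 q0_le by (intro mult_mono) auto
  then show "bc_gap \<le> 1"
    using q0_pos by (simp add: bc_gap_def power2_eq_square field_simps)
qed (use q0_pos in \<open>simp add: bc_gap_def\<close>)

lemma bc_gap_eq: "bc_gap = 8 * real H * \<delta>\<^sup>2"
  using H_ge by (simp add: bc_gap_def q0_def)

definition in_pair :: "nat \<Rightarrow> nat \<Rightarrow> bool" where
  "in_pair i s \<longleftrightarrow> s < 2 * m \<and> s div 2 = i"

lemma in_pair_partner: "in_pair i (partner s) = in_pair i s"
  using partner_same_pair[of s] unfolding in_pair_def by (cases "s < 2 * m") (auto simp: partner_def)

lemma bhattacharyya_hard_trans_ge:
  "1 - bc_gap * of_bool (in_pair i s \<and> a \<in> {1, 2})
     \<le> bhattacharyya (hard_trans (insert i \<sigma>) s a) (hard_trans (\<sigma> - {i}) s a)"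
proof (cases "in_pair i s \<and> a \<in> {1, 2}")
  case True
  then have "{move_prob_at (insert i \<sigma>) s a, move_prob_at (\<sigma> - {i}) s a} = {q0 + \<delta>, q0 - \<delta>}"
    unfolding move_prob_at_def move_prob_def in_pair_def by auto
  then show ?thesis
    using True q0_pos q0_le \<delta>_pos \<delta>_le_half_q0 unfolding hard_trans_def bc_gap_def
    by (simp add: bhattacharyya_flip_pmf_ge)
next
  case False
  then have "hard_trans (insert i \<sigma>) s a = hard_trans (\<sigma> - {i}) s a"
    unfolding hard_trans_def move_prob_at_def move_prob_def in_pair_def by auto
  then show ?thesis
    using bc_gap_bounds by (simp add: bhattacharyya_self finite_set_hard_trans)
qed

lemma sum_behaviour_action_informative:
  "(\<Sum>a\<in>set_pmf behaviour_action. pmf behaviour_action a * (1 - y * of_bool (a \<in> {1, 2}))) = 1 - 2 * \<theta> * y"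
proof -
  have "(\<Sum>a\<in>set_pmf behaviour_action. pmf behaviour_action a * of_bool (a \<in> {1, 2}))
      = (\<Sum>a\<in>set_pmf behaviour_action \<inter> {1, 2}. pmf behaviour_action a)"
    using finite_set_behaviour_action
    by (simp add: sum.inter_restrict of_bool_def) (intro sum.cong; simp)
  also have "\<dots> = (\<Sum>a\<in>{1, 2}. pmf behaviour_action a)"
    by (rule sum.mono_neutral_left) (auto simp: set_pmf_iff)
  also have "\<dots> = 2 * \<theta>"
    by (simp add: pmf_behaviour_action)
  finally show ?thesis
    using finite_set_behaviour_action
    by (simp add: algebra_simps sum_subtractf sum_distrib_left[symmetric] sum_pmf_eq_1)
qed

lemma finite_set_traj_behaviour: "finite (set_pmf (traj (hard_mdp \<sigma>) behaviour t s k))"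
  by (rule finite_set_traj) (auto simp: behaviour_def finite_set_behaviour_action finite_set_hard_trans)

lemma bhattacharyya_after_action_ge:
  assumes later: "\<And>s'. in_pair i s' = in_pair i s \<Longrightarrow>
      X \<le> bhattacharyya (traj (hard_mdp (insert i \<sigma>)) behaviour (Suc t) s' k)
                         (traj (hard_mdp (\<sigma> - {i})) behaviour (Suc t) s' k)"
    and "0 \<le> X"
  shows "X * (1 - bc_gap * of_bool (in_pair i s \<and> a \<in> {1, 2}))
    \<le> bhattacharyya
        (bind_pmf (hard_trans (insert i \<sigma>) s a)
           (\<lambda>s'. map_pmf ((#) (s, a, hard_rew t s a)) (traj (hard_mdp (insert i \<sigma>)) behaviour (Suc t) s' k)))
        (bind_pmf (hard_trans (\<sigma> - {i}) s a)
           (\<lambda>s'. map_pmf ((#) (s, a, hard_rew t s a)) (traj (hard_mdp (\<sigma> - {i})) behaviour (Suc t) s' k)))"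
proof -
  have "X * (1 - bc_gap * of_bool (in_pair i s \<and> a \<in> {1, 2}))
      \<le> X * bhattacharyya (hard_trans (insert i \<sigma>) s a) (hard_trans (\<sigma> - {i}) s a)"
    using bhattacharyya_hard_trans_ge assms(2) by (rule mult_left_mono)
  also have "\<dots> \<le> bhattacharyya
        (bind_pmf (hard_trans (insert i \<sigma>) s a)
           (\<lambda>s'. map_pmf ((#) (s, a, hard_rew t s a)) (traj (hard_mdp (insert i \<sigma>)) behaviour (Suc t) s' k)))
        (bind_pmf (hard_trans (\<sigma> - {i}) s a)
           (\<lambda>s'. map_pmf ((#) (s, a, hard_rew t s a)) (traj (hard_mdp (\<sigma> - {i})) behaviour (Suc t) s' k)))"
  proof (intro bhattacharyya_bind_ge_mult finite_set_hard_trans finite_set_bind_pmf)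
    fix s' assume "s' \<in> set_pmf (hard_trans (insert i \<sigma>) s a)"
    then have "in_pair i s' = in_pair i s"
      using set_hard_trans in_pair_partner by blast
    then show "X \<le> bhattacharyya
        (map_pmf ((#) (s, a, hard_rew t s a)) (traj (hard_mdp (insert i \<sigma>)) behaviour (Suc t) s' k))
        (map_pmf ((#) (s, a, hard_rew t s a)) (traj (hard_mdp (\<sigma> - {i})) behaviour (Suc t) s' k))"
      using later by (blast intro: order_trans bhattacharyya_map_pmf_ge finite_set_traj_behaviour)
  qed (simp_all add: finite_set_traj_behaviour)
  finally show ?thesis .
qed

text \<open>Only the visits of pair \<open>i\<close> with an informative action 1 or 2 reveal the sign of pair \<open>i\<close>,
  and the behaviour policy plays those with probability \<open>2 * \<theta>\<close>.\<close>

lemma bhattacharyya_traj_Suc_ge: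
  assumes later: "\<And>s'. in_pair i s' = in_pair i s \<Longrightarrow>
      X \<le> bhattacharyya (traj (hard_mdp (insert i \<sigma>)) behaviour (Suc t) s' k)
                         (traj (hard_mdp (\<sigma> - {i})) behaviour (Suc t) s' k)"
    and "0 \<le> X"
  shows "X * (1 - 2 * \<theta> * bc_gap * of_bool (in_pair i s))
    \<le> bhattacharyya (traj (hard_mdp (insert i \<sigma>)) behaviour t s (Suc k))
                     (traj (hard_mdp (\<sigma> - {i})) behaviour t s (Suc k))"
proof -
  define next_traj where "next_traj \<rho> a = bind_pmf (hard_trans \<rho> s a)
      (\<lambda>s'. map_pmf ((#) (s, a, hard_rew t s a)) (traj (hard_mdp \<rho>) behaviour (Suc t) s' k))" for \<rho> a
  have traj_Suc: "traj (hard_mdp \<rho>) behaviour t s (Suc k) = bind_pmf behaviour_action (next_traj \<rho>)" for \<rho>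
    by (simp add: next_traj_def[abs_def] behaviour_def)
  have "X * (1 - 2 * \<theta> * bc_gap * of_bool (in_pair i s))
      = X * (\<Sum>a\<in>set_pmf behaviour_action. pmf behaviour_action a
           * (1 - bc_gap * of_bool (in_pair i s) * of_bool (a \<in> {1, 2})))"
    unfolding sum_behaviour_action_informative by (simp add: mult_ac)
  also have "\<dots> = (\<Sum>a\<in>set_pmf behaviour_action. pmf behaviour_action a
           * (X * (1 - bc_gap * of_bool (in_pair i s \<and> a \<in> {1, 2}))))"
    by (simp only: of_bool_conj sum_distrib_left mult.assoc mult.left_commute)
  also have "\<dots> \<le> (\<Sum>a\<in>set_pmf behaviour_action. sqrt (pmf behaviour_action a * pmf behaviour_action a)
      * bhattacharyya (next_traj (insert i \<sigma>) a) (next_traj (\<sigma> - {i}) a))"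
  proof (rule sum_mono)
    fix a
    have "X * (1 - bc_gap * of_bool (in_pair i s \<and> a \<in> {1, 2}))
        \<le> bhattacharyya (next_traj (insert i \<sigma>) a) (next_traj (\<sigma> - {i}) a)"
      unfolding next_traj_def using later assms(2) by (rule bhattacharyya_after_action_ge)
    then show "pmf behaviour_action a * (X * (1 - bc_gap * of_bool (in_pair i s \<and> a \<in> {1, 2})))
        \<le> sqrt (pmf behaviour_action a * pmf behaviour_action a)
           * bhattacharyya (next_traj (insert i \<sigma>) a) (next_traj (\<sigma> - {i}) a)"
      unfolding real_sqrt_abs2 abs_of_nonneg[OF pmf_nonneg] by (rule mult_left_mono) simp
  qed
  also have "\<dots> \<le> bhattacharyya (traj (hard_mdp (insert i \<sigma>)) behaviour t s (Suc k))
                               (traj (hard_mdp (\<sigma> - {i})) behaviour t s (Suc k))"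
    using finite_set_traj_behaviour[of _ t s "Suc k"] unfolding traj_Suc
    by (intro bhattacharyya_bind_ge finite_set_behaviour_action) auto
  finally show ?thesis .
qed

lemma bhattacharyya_traj_ge:
  "(1 - 2 * \<theta> * bc_gap * of_bool (in_pair i s)) ^ k
     \<le> bhattacharyya (traj (hard_mdp (insert i \<sigma>)) behaviour t s k) (traj (hard_mdp (\<sigma> - {i})) behaviour t s k)"
proof (induction k arbitrary: t s)
  case (Suc k)
  have "0 \<le> 1 - 2 * \<theta> * bc_gap * of_bool (in_pair i s)"
    using \<theta>_bounds bc_gap_bounds mult_mono[of \<theta> "1/3" bc_gap 1] by simp
  moreover have "(1 - 2 * \<theta> * bc_gap * of_bool (in_pair i s)) ^ k
      \<le> bhattacharyya (traj (hard_mdp (insert i \<sigma>)) behaviour (Suc t) s' k)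
                       (traj (hard_mdp (\<sigma> - {i})) behaviour (Suc t) s' k)"
    if "in_pair i s' = in_pair i s" for s'
    using Suc.IH[of s' "Suc t"] that by simp
  ultimately have "(1 - 2 * \<theta> * bc_gap * of_bool (in_pair i s)) ^ k * (1 - 2 * \<theta> * bc_gap * of_bool (in_pair i s))
      \<le> bhattacharyya (traj (hard_mdp (insert i \<sigma>)) behaviour t s (Suc k))
                       (traj (hard_mdp (\<sigma> - {i})) behaviour t s (Suc k))"
    using bhattacharyya_traj_Suc_ge[of i s _ \<sigma> t k] by simp
  then show ?case
    by (simp only: power_Suc mult.commute)
qed (simp add: bhattacharyya_self)

lemma finite_set_episode: "finite (set_pmf (episode_pmf (hard_mdp \<sigma>) behaviour H))"
  unfolding episode_pmf_def by (intro finite_set_bind_pmf finite_set_traj_behaviour) (simp add: set_init_unif)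

lemma finite_set_data: "finite (set_pmf (data_pmf n (hard_mdp \<sigma>) behaviour H))"
  unfolding data_pmf_def by (intro finite_set_Pi_pmf finite_set_episode) simp

lemma sum_in_pair: "i < m \<Longrightarrow> (\<Sum>s<S. of_bool (in_pair i s) :: real) = 2"
proof -
  assume "i < m"
  then have "{s. s < S \<and> in_pair i s} = {2 * i, 2 * i + 1}"
    using m_bounds(3) unfolding in_pair_def by auto
  then show ?thesis
    by (simp add: sum.If_cases Int_def)
qed

lemma bhattacharyya_episode_ge:
  assumes "i < m"
  shows "1 - 4 * real H * dm * bc_gap
           \<le> bhattacharyya (episode_pmf (hard_mdp (insert i \<sigma>)) behaviour H) (episode_pmf (hard_mdp (\<sigma> - {i})) behaviour H)"
proof -
  define x where "x s = 2 * \<theta> * bc_gap * of_bool (in_pair i s)" for s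
  have x_le: "x s \<le> 1" for s
    using \<theta>_bounds bc_gap_bounds mult_mono[of \<theta> "1/3" bc_gap 1] by (simp add: x_def)
  have "1 - 4 * real H * dm * bc_gap = (\<Sum>s<S. (1 - real H * x s) / real S)"
    using sum_in_pair[OF assms] S_ge
    by (simp add: x_def \<theta>_def sum_divide_distrib[symmetric] sum_subtractf sum_distrib_left[symmetric] field_simps)
  also have "\<dots> \<le> (\<Sum>s<S. sqrt (pmf init_unif s * pmf init_unif s)
       * bhattacharyya (traj (hard_mdp (insert i \<sigma>)) behaviour 1 s H) (traj (hard_mdp (\<sigma> - {i})) behaviour 1 s H))"
  proof (intro sum_mono)
    fix s assume "s \<in> {..<S}"
    have "1 - real H * x s \<le> (1 - x s) ^ H"
      using Bernoulli_inequality[of "- x s" H] x_le[of s] by simp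
    also have "\<dots> \<le> bhattacharyya (traj (hard_mdp (insert i \<sigma>)) behaviour 1 s H) (traj (hard_mdp (\<sigma> - {i})) behaviour 1 s H)"
      unfolding x_def by (rule bhattacharyya_traj_ge)
    finally have "(1 - real H * x s) / real S \<le> bhattacharyya (traj (hard_mdp (insert i \<sigma>)) behaviour 1 s H)
        (traj (hard_mdp (\<sigma> - {i})) behaviour 1 s H) / real S"
      by (rule divide_right_mono) simp
    moreover have "sqrt (pmf init_unif s * pmf init_unif s) * B = B / real S" for B
      using \<open>s \<in> {..<S}\<close> by (simp only: real_sqrt_abs2 abs_of_nonneg[OF pmf_nonneg]) (simp add: pmf_init_unif)
    ultimately show "(1 - real H * x s) / real S \<le> sqrt (pmf init_unif s * pmf init_unif s)
       * bhattacharyya (traj (hard_mdp (insert i \<sigma>)) behaviour 1 s H) (traj (hard_mdp (\<sigma> - {i})) behaviour 1 s H)"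
      by (simp only:)
  qed
  also have "\<dots> \<le> bhattacharyya (episode_pmf (hard_mdp (insert i \<sigma>)) behaviour H) (episode_pmf (hard_mdp (\<sigma> - {i})) behaviour H)"
    using finite_set_episode[of "insert i \<sigma>"] finite_set_episode[of "\<sigma> - {i}"]
    unfolding episode_pmf_def hard_mdp_simps
    by (subst set_init_unif[symmetric], intro bhattacharyya_bind_ge) (simp_all add: set_init_unif)
  finally show ?thesis .
qed

lemma overlap_data_ge:
  assumes "i < m" and n: "real n * (4 * real H * dm * bc_gap) \<le> 1 / 2"
  shows "1 / 8 \<le> overlap (data_pmf n (hard_mdp (insert i \<sigma>)) behaviour H) (data_pmf n (hard_mdp (\<sigma> - {i})) behaviour H)"
proof -
  define \<eta> where "\<eta> = 4 * real H * dm * bc_gap"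
  define BC_data where "BC_data = bhattacharyya (data_pmf n (hard_mdp (insert i \<sigma>)) behaviour H)
                                                (data_pmf n (hard_mdp (\<sigma> - {i})) behaviour H)"
  have "1 / 2 \<le> BC_data"
  proof (cases "n = 0")
    case True
    then show ?thesis
      by (simp add: BC_data_def data_pmf_def bhattacharyya_self)
  next
    case False
    have "0 \<le> \<eta>" "1 \<le> real n"
      using False dm_pos bc_gap_bounds by (simp_all add: \<eta>_def)
    then have "\<eta> \<le> real n * \<eta>"
      using mult_right_mono[of 1 "real n" \<eta>] by simp
    then have "\<eta> \<le> 1 / 2"
      using n by (simp add: \<eta>_def)
    have "1 / 2 \<le> 1 + real n * (- \<eta>)"
      using n by (simp add: \<eta>_def)
    also have "\<dots> \<le> (1 - \<eta>) ^ n"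
      using Bernoulli_inequality[of "- \<eta>" n] \<open>\<eta> \<le> 1 / 2\<close> by simp
    also have "\<dots> \<le> bhattacharyya (episode_pmf (hard_mdp (insert i \<sigma>)) behaviour H)
                                  (episode_pmf (hard_mdp (\<sigma> - {i})) behaviour H) ^ n"
      using bhattacharyya_episode_ge[OF assms(1)] \<open>\<eta> \<le> 1 / 2\<close> by (intro power_mono) (auto simp: \<eta>_def)
    also have "\<dots> \<le> BC_data"
      unfolding BC_data_def data_pmf_def by (intro bhattacharyya_Pi_pmf_ge finite_set_episode)
    finally show ?thesis .
  qed
  then have "(1 / 2)\<^sup>2 / 2 \<le> BC_data\<^sup>2 / 2"
    by (intro divide_right_mono power_mono) auto
  also have "\<dots> \<le> overlap (data_pmf n (hard_mdp (insert i \<sigma>)) behaviour H) (data_pmf n (hard_mdp (\<sigma> - {i})) behaviour H)"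
    unfolding BC_data_def by (intro overlap_ge_bhattacharyya_sq finite_set_data)
  finally show ?thesis by (simp add: power2_eq_square)
qed

definition large_loss :: "nat \<Rightarrow> bool \<Rightarrow> policy set" where
  "large_loss i b = {\<pi>. \<kappa> / 2 \<le> pair_loss i b \<pi>}"

lemma prob_large_loss_add_ge:
  assumes "i < m" "i \<notin> \<sigma>" and n: "real n * (4 * real H * dm * bc_gap) \<le> 1 / 2"
  shows "1 / 8 \<le> measure_pmf.prob (bind_pmf (data_pmf n (hard_mdp (insert i \<sigma>)) behaviour H) alg) (large_loss i True)
                 + measure_pmf.prob (bind_pmf (data_pmf n (hard_mdp \<sigma>) behaviour H) alg) (large_loss i False)"
proof -
  have "\<pi> \<in> large_loss i True \<union> large_loss i False" for \<pi>
    using pair_loss_add_ge[of i \<pi>] by (auto simp: large_loss_def)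
  then have "large_loss i True \<union> large_loss i False = UNIV"
    by auto
  then have "overlap (data_pmf n (hard_mdp (insert i \<sigma>)) behaviour H) (data_pmf n (hard_mdp (\<sigma> - {i})) behaviour H)
      \<le> measure_pmf.prob (bind_pmf (data_pmf n (hard_mdp (insert i \<sigma>)) behaviour H) alg) (large_loss i True)
        + measure_pmf.prob (bind_pmf (data_pmf n (hard_mdp (\<sigma> - {i})) behaviour H) alg) (large_loss i False)"
    by (intro overlap_le_prob_bind_add finite_set_data)
  moreover have "\<sigma> - {i} = \<sigma>"
    using assms(2) by simp
  ultimately show ?thesis
    using overlap_data_ge[OF assms(1) n, of \<sigma>] by simp
qed

lemma value_gap_ge_of_many_large_losses:
  assumes many: "real m / 32 \<le> (\<Sum>i<m. indicator (large_loss i (i \<in> \<sigma>)) \<pi>)"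
    and \<epsilon>: "\<epsilon> \<le> real m * \<kappa> / (64 * real S)"
  shows "\<epsilon> \<le> opt_value S A H (hard_mdp \<sigma>) - pol_value (hard_mdp \<sigma>) H \<pi>"
proof -
  have "0 \<le> \<kappa>"
    using \<delta>_pos H_ge by (simp add: \<kappa>_def)
  then have "real m / 32 * (\<kappa> / 2) \<le> (\<Sum>i<m. indicator (large_loss i (i \<in> \<sigma>)) \<pi>) * (\<kappa> / 2)"
    using many by (intro mult_right_mono) auto
  also have "\<dots> \<le> (\<Sum>i<m. pair_loss i (i \<in> \<sigma>) \<pi>)"
    unfolding sum_distrib_right
    by (intro sum_mono) (auto simp: indicator_def large_loss_def pair_loss_nonneg)
  finally have "\<epsilon> \<le> (\<Sum>i<m. pair_loss i (i \<in> \<sigma>) \<pi>) / real S"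
    using \<epsilon> S_ge divide_right_mono[of "real m / 32 * (\<kappa> / 2)" _ "real S"] by (simp add: field_simps)
  then show ?thesis
    using value_gap_ge[of \<sigma> \<pi>] opt_value_ge_opt_policy[of \<sigma>] by linarith
qed

lemma exists_hard_mdp_fail_prob_ge:
  assumes n: "real n * (4 * real H * dm * bc_gap) \<le> 1 / 2"
    and \<epsilon>: "\<epsilon> \<le> real m * \<kappa> / (64 * real S)"
  shows "\<exists>\<sigma>. 1 / 32 \<le> measure_pmf.prob (bind_pmf (data_pmf n (hard_mdp \<sigma>) behaviour H) alg)
                       {\<pi>. \<epsilon> \<le> opt_value S A H (hard_mdp \<sigma>) - pol_value (hard_mdp \<sigma>) H \<pi>}"
proof -
  define Out where "Out \<sigma> = bind_pmf (data_pmf n (hard_mdp \<sigma>) behaviour H) alg" for \<sigma>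
  obtain \<sigma> where \<sigma>: "real m * (1 / 8) / 2 \<le> (\<Sum>i<m. measure_pmf.prob (Out \<sigma>) (large_loss i (i \<in> \<sigma>)))"
    using assouad_averaging[of m "1 / 8" "\<lambda>\<sigma> i. measure_pmf.prob (Out \<sigma>) (large_loss i (i \<in> \<sigma>))"]
      prob_large_loss_add_ge[OF _ _ n] unfolding Out_def by auto
  define N where "N \<pi> = (\<Sum>i<m. indicator (large_loss i (i \<in> \<sigma>)) \<pi> :: real)" for \<pi>
  have N_bounds: "0 \<le> N \<pi>" "N \<pi> \<le> real m" for \<pi>
    using sum_mono[of "{..<m}" "\<lambda>i. indicator (large_loss i (i \<in> \<sigma>)) \<pi> :: real" "\<lambda>_. 1"]
    by (auto simp: N_def indicator_def intro: sum_nonneg)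
  have "measure_pmf.expectation (Out \<sigma>) N = (\<Sum>i<m. measure_pmf.prob (Out \<sigma>) (large_loss i (i \<in> \<sigma>)))"
    unfolding N_def
    by (subst Bochner_Integration.integral_sum)
       (auto intro: integrable_measure_pmf_bounded[where B=1] simp: indicator_def)
  then have "real m / 16 - real m / 32 \<le> real m * measure_pmf.prob (Out \<sigma>) {\<pi>. real m / 32 \<le> N \<pi>}"
    using prob_ge_of_expectation_ge[of N "real m" "real m / 32" "Out \<sigma>"] N_bounds \<sigma> by simp
  then have "1 / 32 \<le> measure_pmf.prob (Out \<sigma>) {\<pi>. real m / 32 \<le> N \<pi>}"
    using m_bounds(2) by (simp add: field_simps)
  also have "\<dots> \<le> measure_pmf.prob (Out \<sigma>)
      {\<pi>. \<epsilon> \<le> opt_value S A H (hard_mdp \<sigma>) - pol_value (hard_mdp \<sigma>) H \<pi>}"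
    using value_gap_ge_of_many_large_losses[OF _ \<epsilon>]
    by (intro measure_pmf.finite_measure_mono) (auto simp: N_def)
  finally show ?thesis
    unfolding Out_def by blast
qed

lemma fail_prob_lower_bound:
  assumes n: "real n * (32 * (real H)\<^sup>2 * dm * \<delta>\<^sup>2) \<le> 1 / 2" and \<epsilon>: "\<epsilon> \<le> \<delta> * (real H)\<^sup>2 / 1536"
  shows "1 / 32 \<le> (INF alg\<in>{alg. valid_alg S A H alg}.
                      SUP (\<mu>, M)\<in>class_dm S A H dm. fail_prob S A H n \<epsilon> alg \<mu> M)"
proof (rule cINF_greatest)
  show "{alg. valid_alg S A H alg} \<noteq> {}"
    using A_ge by (auto simp: valid_alg_def valid_policy_def intro!: exI[of _ "\<lambda>_. return_pmf (\<lambda>t s. return_pmf 0)"])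
next
  fix alg
  have n': "real n * (4 * real H * dm * bc_gap) \<le> 1 / 2"
    using n by (simp add: bc_gap_eq power2_eq_square algebra_simps)
  have "\<epsilon> \<le> real m * \<kappa> / (64 * real S)"
    using \<epsilon> loss_threshold_ge by linarith
  then obtain \<sigma> where "1 / 32 \<le> measure_pmf.prob (bind_pmf (data_pmf n (hard_mdp \<sigma>) behaviour H) alg)
                       {\<pi>. \<epsilon> \<le> opt_value S A H (hard_mdp \<sigma>) - pol_value (hard_mdp \<sigma>) H \<pi>}"
    using exists_hard_mdp_fail_prob_ge[OF n'] by blast
  then have \<sigma>: "1 / 32 \<le> fail_prob S A H n \<epsilon> alg behaviour (hard_mdp \<sigma>)"
    by (simp add: fail_prob_def)
  have bdd: "bdd_above ((\<lambda>(\<mu>, M). fail_prob S A H n \<epsilon> alg \<mu> M) ` class_dm S A H dm)"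
    by (rule bdd_aboveI[where M=1]) (auto simp: fail_prob_def)
  have "fail_prob S A H n \<epsilon> alg behaviour (hard_mdp \<sigma>)
      \<le> (SUP (\<mu>, M)\<in>class_dm S A H dm. fail_prob S A H n \<epsilon> alg \<mu> M)"
    using cSUP_upper[OF hard_instance_in_class[of \<sigma>] bdd] by simp
  then show "1 / 32 \<le> (SUP (\<mu>, M)\<in>class_dm S A H dm. fail_prob S A H n \<epsilon> alg \<mu> M)"
    using \<sigma> by linarith
qed

end

theorem theorem4p2:
  "\<exists>c1 c2 c p :: real. c1 > 0 \<and> c2 > 0 \<and> c > 0 \<and> p > 0 \<and>
    (\<forall>H S A :: nat. \<forall>\<epsilon> dm :: real. \<forall>n :: nat.
      real H \<ge> c1 \<longrightarrow> real S \<ge> c1 \<longrightarrow> real A \<ge> c1 \<longrightarrow>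
      0 < \<epsilon> \<longrightarrow> \<epsilon> < c2 \<longrightarrow>
      0 < dm \<longrightarrow> dm \<le> 1 / (real S * real A) \<longrightarrow>
      real n \<le> c * (real H)\<^sup>2 / (dm * \<epsilon>\<^sup>2) \<longrightarrow>
      (INF alg\<in>{alg. valid_alg S A H alg}.
         SUP (\<mu>, M)\<in>class_dm S A H dm. fail_prob S A H n \<epsilon> alg \<mu> M) \<ge> p)"
proof -
  have "1 / 32 \<le> (INF alg\<in>{alg. valid_alg S A H alg}.
                    SUP (\<mu>, M)\<in>class_dm S A H dm. fail_prob S A H n \<epsilon> alg \<mu> M)"
    if "12288 \<le> real H" "12288 \<le> real S" "12288 \<le> real A" "0 < \<epsilon>" "\<epsilon> < 1"
      and "0 < dm" "dm \<le> 1 / (real S * real A)"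
      and n: "real n \<le> 1 / 150994944 * (real H)\<^sup>2 / (dm * \<epsilon>\<^sup>2)"
    for H S A \<epsilon> dm n
  proof -
    text \<open>\<open>12288 = 8 * 1536\<close> gives \<open>\<delta> \<le> 1 / (8 H)\<close>, and \<open>150994944 = 64 * 1536\<^sup>2\<close>.\<close>
    define \<delta> where "\<delta> = 1536 * \<epsilon> / (real H)\<^sup>2"
    have "\<delta> \<le> 1 / (8 * real H)"
      using that(1,5) by (simp add: \<delta>_def power2_eq_square field_simps)
    with that interpret hard_instance S A H dm \<delta>
      by unfold_locales (auto simp: \<delta>_def)
    show ?thesis
    proof (rule fail_prob_lower_bound)
      show "real n * (32 * (real H)\<^sup>2 * dm * \<delta>\<^sup>2) \<le> 1 / 2"
        using n that(1,4,6) by (simp add: \<delta>_def power2_eq_square field_simps)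
      show "\<epsilon> \<le> \<delta> * (real H)\<^sup>2 / 1536"
        using that(1) by (simp add: \<delta>_def)
    qed
  qed
  then show ?thesis
    by (intro exI[of _ 12288] exI[of _ 1] exI[of _ "1 / 150994944"] exI[of _ "1 / 32"]) auto
qed

end
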